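(* Under the model assumptions in the context, suppose the distribution of $\mathbf W$ is $p_{\mathbf W}(\cdot;\boldsymbol\psi^* )$ where $\boldsymbol\psi^*\in\Theta_{\boldsymbol\psi}$ satisfies $\pi^1<\dots<\pi^J$ and conditions ID$(k)$ for some integer $k\ge1$ with $T_0\ge k+1$, $T\ge 2(k+1)$. Then for each $t\ge T_0+1$ the ATT $\boldsymbol\mu^{\mathrm{ATT}}_t=\mathbb{E}[\mathbf X_t(1)-\mathbf X_t(0)\mid D=1]=\sum_{j=1}^J\Pr(Z=j\mid D=1)\boldsymbol\mu^{\mathrm{ATT},j}_t$ is uniquely determined by the pmf $\{p_{\mathbf W}(\mathbf w;\boldsymbol\psi^* ):\mathbf w\in\mathcal X^T\times\{0,1\}\}$.
   Context: Fix integers $K\ge2$, $J\ge1$, $T_0\ge1$, $T>T_0$, $\mathcal X=\{x\in\{0,1\}^K:\sum_k x^{(k)}=1\}$. A unit has latent type $Z\in\{1,\dots,J\}$, treatment indicator $D\in\{0,1\}$ (treated units untreated in periods $\le T_0$, treated afterwards), potential outcomes $\mathbf X_t(0),\mathbf X_t(1)\in\mathcal X$; observed $\mathbf X_t=\mathbf X_t(0)$ for $t\le T_0$, $\mathbf X_t=D\mathbf X_t(1)+(1-D)\mathbf X_t(0)$ for $t>T_0$, $\mathbf W=(\mathbf X_1,\dots,\mathbf X_T,D)$, $\mathbf X_1^{T_0}=(\mathbf X_1,\dots,\mathbf X_{T_0})$. LTATT: $\boldsymbol\mu^{\mathrm{ATT},j}_t=\mathbb{E}[\mathbf X_t(1)-\mathbf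 X_t(0)\mid D=1,Z=j]$. Model assumptions: no anticipation ($\mathbf X_t(1)=\mathbf X_t(0)$, $t\le T_0$); for $t\ge T_0+1$ and all $\mathbf x_t,\mathbf x_1^{T_0},j$: $\Pr(\mathbf X_t(0)=\mathbf x_t\mid\mathbf X_1^{T_0}=\mathbf x_1^{T_0},D=0,Z=j)=\Pr(\mathbf X_t(0)=\mathbf x_t\mid\mathbf X_1^{T_0}=\mathbf x_1^{T_0},D=1,Z=j)$; there is $\epsilon>0$ with $\epsilon\le\Pr(D=1\mid\mathbf X_1^{T_0}=\mathbf x_1^{T_0},Z=j)\le1-\epsilon$; for each $j,d$, conditional on $Z=j,D=d$, $\{\mathbf X_t(d)\}_{t=1}^T$ is a first-order (possibly non-stationary) Markov chain. $J$ is known. Parametrization: $\boldsymbol\psi=(\boldsymbol\pi,\boldsymbol\varphi^1,\dots,\boldsymbol\varphi^J)$, $\pi^j=\Pr(Z=j)$, $\boldsymbol\varphi^j$ consisting of $p^j_{\mathbf X_1(0),D}(x,d)=\Pr(\mathbf X_1(0)=x,D=d\mid Z=j)$, $p^j_{\mathbf X_t(0)|\mathbf X_{t-1}(0)}(x|x')=\Pr(\mathbf X_t(0)=x\mid\mathbf X_{t-1}(0)=x',Z=j)$ ($t=2,\dots,T$), $p^j_{\mathbf X_t(1)|\mathbf X_{t-1}(1)}(x|x')$ ($t=T_0+1,\dots,T$). $\Theta_{\boldsymbol\psi}$: $\sum_j\pi^j=1$, $\epsilon\le\pi^j\le1-\epsilon$. $p_{\mathbf W}(\mathbf w;\boldsymbol\psi)=\sum_j\pi^jp^j_{\mathbf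 W}(\mathbf w;\boldsymbol\varphi^j)$, where for $\mathbf w=(x_1,\dots,x_T,d)$: $p^j_{\mathbf W}=p^j_{\mathbf X_1(0),D}(x_1,0)\prod_{t=2}^Tp^j_{\mathbf X_t(0)|\mathbf X_{t-1}(0)}(x_t|x_{t-1})$ if $d=0$, and $p^j_{\mathbf X_1(0),D}(x_1,1)\prod_{t=2}^{T_0}p^j_{\mathbf X_t(0)|\mathbf X_{t-1}(0)}(x_t|x_{t-1})\prod_{t=T_0+1}^Tp^j_{\mathbf X_t(1)|\mathbf X_{t-1}(1)}(x_t|x_{t-1})$ if $d=1$. Conditions ID$(k)$: for $\xi_1=(x_1,\dots,x_k)\in\mathcal X^k$, $P^j_1(\xi_1,d)=p^j_{\mathbf X_1(0),D}(x_1,d)\prod_{t=2}^kp^j_{\mathbf X_t(0)|\mathbf X_{t-1}(0)}(x_t|x_{t-1})$, $\tau^j(\xi_1,d)=\pi^jP^j_1(\xi_1,d)/\sum_m\pi^mP^m_1(\xi_1,d)$; $q^j_{21}(\xi_2|\xi_1)=p^j_{\mathbf X_{k+1}(0)|\mathbf X_k(0)}(\xi_2|x_k)$; $q^j_{32}(\xi_3|\xi_2)=p^j_{\mathbf X_{k+2}(0)|\mathbf X_{k+1}(0)}(\xi_3|\xi_2)$; $q^j_{43}(\xi_4|\xi_3)=\prod_{t=k+3}^Tp^j_{\mathbf X_t(0)|\mathbf X_{t-1}(0)}(x_t|x_{t-1})$ for $\xi_4=(x_{k+3},\dots,x_T)$, $x_{k+2}=\xi_3$; $\lambda^j_1(\xi_2|\xi_1)=\tau^j(\xi_1,0)q^j_{21}(\xi_2|\xi_1)$.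 Given $a_1,\dots,a_J\in\mathcal X^k$, $b_1,\dots,b_{J-1}\in\mathcal X^{T-k-2}$: $\bar L_{\xi_2}=[\lambda^j_1(\xi_2|a_i)]_{i,j}$; $L_{\xi_3}$ has first row all ones and $(i+1,j)$ entry $q^j_{43}(b_i|\xi_3)$; $D_{\xi_3|\xi_2}=\mathrm{diag}_j(q^j_{32}(\xi_3|\xi_2))$. (a) There is $\xi_3^*\in\mathcal X$ such that for every $\xi_3\in\mathcal X$ there exist $\check\xi_2,\bar\xi_2,\bar\xi_3\in\mathcal X$, $a_i$, $b_i$ with (i) $\bar L_{\check\xi_2},\bar L_{\bar\xi_2},L_{\xi_3},L_{\xi_3^*},L_{\bar\xi_3}$ nonsingular, (ii) the diagonal entries of $D_{\xi_3|\check\xi_2}D_{\bar\xi_3|\check\xi_2}^{-1}D_{\bar\xi_3|\bar\xi_2}D_{\xi_3|\bar\xi_2}^{-1}$ pairwise distinct; (b) all $q^j_{32},q^j_{43}$ values positive; (c) for every $\xi_1$ there are $c_1,\dots,c_J\in\mathcal X$ with $[q^j_{21}(c_i|\xi_1)]_{i,j}$ nonsingular; (d) for every $\xi_2$ there are $e_1,\dots,e_J\in\mathcal X^k$ with $[\tau^j(e_i,1)q^j_{21}(\xi_2|e_i)]_{i,j}$ nonsingular. *)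

theory Defs
  imports Complex_Main "Jordan_Normal_Form.Determinant"
begin

(* Encoding conventions:
   - an element of the outcome space X (one-hot vectors in {0,1}^K) is encoded by
     the index of its unique 1, i.e. a natural number < K;
   - latent types are indexed 0..J-1 (paper: 1..J); treatment d is 0 or 1;
   - a sequence (x_1,...,x_n) in X^n is a list xs of length n, with x_t = xs ! (t-1). *)

definition paths :: "nat \<Rightarrow> nat \<Rightarrow> nat list set" where
  "paths K n = {xs. length xs = n \<and> set xs \<subseteq> {..<K}}"

record param =
  mixw   :: "nat \<Rightarrow> real"                         (* pi^j = Pr(Z=j) *)
  init   :: "nat \<Rightarrow> nat \<Rightarrow> nat \<Rightarrow> real"           (* init j x d = p^j_{X_1(0),D}(x,d) *)
  trans0 :: "nat \<Rightarrow> nat \<Rightarrow> nat \<Rightarrow> nat \<Rightarrow> real"   (* trans0 j t x x' = p^j_{X_t(0)|X_{t-1}(0)}(x|x'), t=2..T *)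
  trans1 :: "nat \<Rightarrow> nat \<Rightarrow> nat \<Rightarrow> nat \<Rightarrow> real"   (* trans1 j t x x' = p^j_{X_t(1)|X_{t-1}(1)}(x|x'), t=T0+1..T *)

definition in_Theta :: "nat \<Rightarrow> real \<Rightarrow> param \<Rightarrow> bool" where
  "in_Theta J \<epsilon> \<psi> \<longleftrightarrow> (\<Sum>j<J. mixw \<psi> j) = 1 \<and>
     (\<forall>j<J. \<epsilon> \<le> mixw \<psi> j \<and> mixw \<psi> j \<le> 1 - \<epsilon>)"

definition valid_pmfs :: "nat \<Rightarrow> nat \<Rightarrow> nat \<Rightarrow> nat \<Rightarrow> param \<Rightarrow> bool" where
  "valid_pmfs K J T0 T \<psi> \<longleftrightarrow>
     (\<forall>j<J.
        (\<forall>x<K. \<forall>d\<in>{0,1}. init \<psi> j x d \<ge> 0) \<and>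
        (\<Sum>x<K. init \<psi> j x 0 + init \<psi> j x 1) = 1 \<and>
        (\<forall>t\<in>{2..T}. \<forall>x'<K. (\<forall>x<K. trans0 \<psi> j t x x' \<ge> 0) \<and> (\<Sum>x<K. trans0 \<psi> j t x x') = 1) \<and>
        (\<forall>t\<in>{T0+1..T}. \<forall>x'<K. (\<forall>x<K. trans1 \<psi> j t x x' \<ge> 0) \<and> (\<Sum>x<K. trans1 \<psi> j t x x') = 1))"

(* Pr(X_1^n(0) = xs, D = d | Z = j), using the untreated transitions for t = 2..n *)
definition Ppre :: "param \<Rightarrow> nat \<Rightarrow> nat \<Rightarrow> nat list \<Rightarrow> nat \<Rightarrow> real" where
  "Ppre \<psi> j n xs d = init \<psi> j (xs ! 0) d * (\<Prod>t\<in>{2..n}. trans0 \<psi> j t (xs ! (t - 1)) (xs ! (t - 2)))"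

(* overlap: eps <= Pr(D=1 | X_1^{T0} = x, Z = j) <= 1 - eps *)
definition overlap :: "nat \<Rightarrow> nat \<Rightarrow> nat \<Rightarrow> real \<Rightarrow> param \<Rightarrow> bool" where
  "overlap K J T0 \<epsilon> \<psi> \<longleftrightarrow>
     (\<forall>j<J. \<forall>xs\<in>paths K T0.
        \<epsilon> * (Ppre \<psi> j T0 xs 0 + Ppre \<psi> j T0 xs 1) \<le> Ppre \<psi> j T0 xs 1 \<and>
        Ppre \<psi> j T0 xs 1 \<le> (1 - \<epsilon>) * (Ppre \<psi> j T0 xs 0 + Ppre \<psi> j T0 xs 1))"

definition model :: "nat \<Rightarrow> nat \<Rightarrow> nat \<Rightarrow> nat \<Rightarrow> real \<Rightarrow> param \<Rightarrow> bool" where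
  "model K J T0 T \<epsilon> \<psi> \<longleftrightarrow> in_Theta J \<epsilon> \<psi> \<and> valid_pmfs K J T0 T \<psi> \<and> overlap K J T0 \<epsilon> \<psi>"

definition pWj :: "nat \<Rightarrow> nat \<Rightarrow> param \<Rightarrow> nat \<Rightarrow> nat list \<Rightarrow> nat \<Rightarrow> real" where
  "pWj T0 T \<psi> j xs d =
     (if d = 0 then Ppre \<psi> j T xs 0
      else Ppre \<psi> j T0 xs 1 * (\<Prod>t\<in>{T0+1..T}. trans1 \<psi> j t (xs ! (t - 1)) (xs ! (t - 2))))"

definition pW :: "nat \<Rightarrow> nat \<Rightarrow> nat \<Rightarrow> param \<Rightarrow> nat list \<Rightarrow> nat \<Rightarrow> real" where
  "pW J T0 T \<psi> xs d = (\<Sum>j<J. mixw \<psi> j * pWj T0 T \<psi> j xs d)"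

(* model-implied law of the untreated potential path of a treated unit of type j:
   Pr(X_1^T(0) = xs, D = 1 | Z = j)  (no anticipation, conditional parallel evolution, Markov) *)
definition pW0cf :: "nat \<Rightarrow> nat \<Rightarrow> param \<Rightarrow> nat \<Rightarrow> nat list \<Rightarrow> real" where
  "pW0cf T0 T \<psi> j xs =
     Ppre \<psi> j T0 xs 1 * (\<Prod>t\<in>{T0+1..T}. trans0 \<psi> j t (xs ! (t - 1)) (xs ! (t - 2)))"

definition prD1 :: "nat \<Rightarrow> nat \<Rightarrow> param \<Rightarrow> nat \<Rightarrow> real" where
  "prD1 K T0 \<psi> j = (\<Sum>x<K. init \<psi> j x 1)"

definition postZ :: "nat \<Rightarrow> nat \<Rightarrow> nat \<Rightarrow> param \<Rightarrow> nat \<Rightarrow> real" where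
  "postZ K J T0 \<psi> j = mixw \<psi> j * prD1 K T0 \<psi> j / (\<Sum>m<J. mixw \<psi> m * prD1 K T0 \<psi> m)"

(* c-th coordinate of the LTATT mu^{ATT,j}_t = E[X_t(1) - X_t(0) | D=1, Z=j] *)
definition ltatt :: "nat \<Rightarrow> nat \<Rightarrow> nat \<Rightarrow> param \<Rightarrow> nat \<Rightarrow> nat \<Rightarrow> nat \<Rightarrow> real" where
  "ltatt K T0 T \<psi> j t c =
     ((\<Sum>xs\<in>paths K T. if xs ! (t - 1) = c then pWj T0 T \<psi> j xs 1 else 0)
      - (\<Sum>xs\<in>paths K T. if xs ! (t - 1) = c then pW0cf T0 T \<psi> j xs else 0))
     / prD1 K T0 \<psi> j"

definition att :: "nat \<Rightarrow> nat \<Rightarrow> nat \<Rightarrow> nat \<Rightarrow> param \<Rightarrow> nat \<Rightarrow> nat \<Rightarrow> real" where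
  "att K J T0 T \<psi> t c = (\<Sum>j<J. postZ K J T0 \<psi> j * ltatt K T0 T \<psi> j t c)"

definition tau :: "nat \<Rightarrow> nat \<Rightarrow> param \<Rightarrow> nat \<Rightarrow> nat list \<Rightarrow> nat \<Rightarrow> real" where
  "tau J k \<psi> j \<xi>1 d = mixw \<psi> j * Ppre \<psi> j k \<xi>1 d / (\<Sum>m<J. mixw \<psi> m * Ppre \<psi> m k \<xi>1 d)"

definition q21 :: "nat \<Rightarrow> param \<Rightarrow> nat \<Rightarrow> nat \<Rightarrow> nat list \<Rightarrow> real" where
  "q21 k \<psi> j \<xi>2 \<xi>1 = trans0 \<psi> j (k + 1) \<xi>2 (\<xi>1 ! (k - 1))"

definition q32 :: "nat \<Rightarrow> param \<Rightarrow> nat \<Rightarrow> nat \<Rightarrow> nat \<Rightarrow> real" where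
  "q32 k \<psi> j \<xi>3 \<xi>2 = trans0 \<psi> j (k + 2) \<xi>3 \<xi>2"

(* xi4 = (x_{k+3},...,x_T) = xi4 ! 0, ..., and x_{k+2} = xi3 *)
definition q43 :: "nat \<Rightarrow> nat \<Rightarrow> param \<Rightarrow> nat \<Rightarrow> nat list \<Rightarrow> nat \<Rightarrow> real" where
  "q43 T k \<psi> j \<xi>4 \<xi>3 =
     (\<Prod>t\<in>{k+3..T}. trans0 \<psi> j t (\<xi>4 ! (t - (k + 3)))
                         (if t = k + 3 then \<xi>3 else \<xi>4 ! (t - (k + 4))))"

definition lambda1 :: "nat \<Rightarrow> nat \<Rightarrow> param \<Rightarrow> nat \<Rightarrow> nat \<Rightarrow> nat list \<Rightarrow> real" where
  "lambda1 J k \<psi> j \<xi>2 \<xi>1 = tau J k \<psi> j \<xi>1 0 * q21 k \<psi> j \<xi>2 \<xi>1"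

(* \bar L_{xi2} = [lambda^j_1(xi2 | a_i)]_{i,j}  (0-based indices) *)
definition Lbar :: "nat \<Rightarrow> nat \<Rightarrow> param \<Rightarrow> (nat \<Rightarrow> nat list) \<Rightarrow> nat \<Rightarrow> real mat" where
  "Lbar J k \<psi> a \<xi>2 = mat J J (\<lambda>(i, j). lambda1 J k \<psi> j \<xi>2 (a i))"

definition Lmat :: "nat \<Rightarrow> nat \<Rightarrow> nat \<Rightarrow> param \<Rightarrow> (nat \<Rightarrow> nat list) \<Rightarrow> nat \<Rightarrow> real mat" where
  "Lmat J T k \<psi> b \<xi>3 = mat J J (\<lambda>(i, j). if i = 0 then 1 else q43 T k \<psi> j (b (i - 1)) \<xi>3)"

(* j-th diagonal entry of D_{xi3|chk2} D_{bar3|chk2}^{-1} D_{bar3|bar2} D_{xi3|bar2}^{-1} *)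
definition eigen_entry :: "nat \<Rightarrow> param \<Rightarrow> nat \<Rightarrow> nat \<Rightarrow> nat \<Rightarrow> nat \<Rightarrow> nat \<Rightarrow> real" where
  "eigen_entry k \<psi> \<xi>3 chk2 bar2 bar3 j =
     q32 k \<psi> j \<xi>3 chk2 * inverse (q32 k \<psi> j bar3 chk2) *
     q32 k \<psi> j bar3 bar2 * inverse (q32 k \<psi> j \<xi>3 bar2)"

definition ID_a :: "nat \<Rightarrow> nat \<Rightarrow> nat \<Rightarrow> nat \<Rightarrow> param \<Rightarrow> bool" where
  "ID_a K J T k \<psi> \<longleftrightarrow>
     (\<exists>s3<K. \<forall>\<xi>3<K. \<exists>chk2<K. \<exists>bar2<K. \<exists>bar3<K. \<exists>a b.
        (\<forall>i<J. a i \<in> paths K k) \<and> (\<forall>i<J - 1. b i \<in> paths K (T - k - 2)) \<and>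
        det (Lbar J k \<psi> a chk2) \<noteq> 0 \<and> det (Lbar J k \<psi> a bar2) \<noteq> 0 \<and>
        det (Lmat J T k \<psi> b \<xi>3) \<noteq> 0 \<and> det (Lmat J T k \<psi> b s3) \<noteq> 0 \<and>
        det (Lmat J T k \<psi> b bar3) \<noteq> 0 \<and>
        inj_on (eigen_entry k \<psi> \<xi>3 chk2 bar2 bar3) {..<J})"

definition ID_b :: "nat \<Rightarrow> nat \<Rightarrow> nat \<Rightarrow> nat \<Rightarrow> param \<Rightarrow> bool" where
  "ID_b K J T k \<psi> \<longleftrightarrow>
     (\<forall>j<J. (\<forall>\<xi>3<K. \<forall>\<xi>2<K. q32 k \<psi> j \<xi>3 \<xi>2 > 0) \<and>
            (\<forall>\<xi>4\<in>paths K (T - k - 2). \<forall>\<xi>3<K. q43 T k \<psi> j \<xi>4 \<xi>3 > 0))"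

definition ID_c :: "nat \<Rightarrow> nat \<Rightarrow> nat \<Rightarrow> param \<Rightarrow> bool" where
  "ID_c K J k \<psi> \<longleftrightarrow>
     (\<forall>\<xi>1\<in>paths K k. \<exists>c. (\<forall>i<J. c i < K) \<and>
        det (mat J J (\<lambda>(i, j). q21 k \<psi> j (c i) \<xi>1)) \<noteq> 0)"

definition ID_d :: "nat \<Rightarrow> nat \<Rightarrow> nat \<Rightarrow> param \<Rightarrow> bool" where
  "ID_d K J k \<psi> \<longleftrightarrow>
     (\<forall>\<xi>2<K. \<exists>e. (\<forall>i<J. e i \<in> paths K k) \<and>
        det (mat J J (\<lambda>(i, j). tau J k \<psi> j (e i) 1 * q21 k \<psi> j \<xi>2 (e i))) \<noteq> 0)"

definition ID :: "nat \<Rightarrow> nat \<Rightarrow> nat \<Rightarrow> nat \<Rightarrow> param \<Rightarrow> bool" where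
  "ID K J T k \<psi> \<longleftrightarrow> ID_a K J T k \<psi> \<and> ID_b K J T k \<psi> \<and> ID_c K J k \<psi> \<and> ID_d K J k \<psi>"

end

theory Submission
  imports Defs
begin

text \<open>Fix a history a_i of the first k periods. The untreated moments of the remaining periods
  factor as Lbar_y D_{x|y} L_x^T, collecting the type-specific laws of the history together with
  the next state y, of the transition from y to the state x of period k + 2, and of the
  continuation. If a second parameter produces the same distribution, comparing factorisations
  yields for every y a matrix B_y with B_y D'_{x|y} L'_x^T = D_{x|y} L_x^T for all x. Eliminating
  L'_x between two values y1, y2 and two values x, z shows that every nonzero entry of B_{y1}
  matches an eigenvalue of D_{x|y1} D_{z|y1}^{-1} D_{z|y2} D_{x|y2}^{-1} for one parameter with
  one for the other. These eigenvalues being distinct, B_{y1} is a scaled permutation, so the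
  mixture components of the untreated path law agree up to a relabelling of the types; the anchor
  state makes the relabelling independent of x. Condition ID(c) carries the relabelling over to
  the treated histories, and by parallel evolution the counterfactual untreated law of the treated
  is the treated history weight times the untreated continuation. The ATT sums over all types, so
  it does not see the relabelling.\<close>

section \<open>Linear algebra\<close>

lemma det_nonzero_imp_kernel_zero:
  fixes F :: "nat \<Rightarrow> nat \<Rightarrow> real"
  assumes det: "det (mat n n (\<lambda>(i, j). F i j)) \<noteq> 0"
    and kernel: "\<forall>i<n. (\<Sum>j<n. F i j * v j) = 0" and j: "j < n"
  shows "v j = 0"
proof -
  let ?A = "mat n n (\<lambda>(i, j). F i j)"
  have "?A *\<^sub>v vec n v = 0\<^sub>v n"
    using kernel by (auto simp: scalar_prod_def row_def lessThan_atLeast0 intro!: eq_vecI)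
  moreover have "?A \<in> carrier_mat n n" by simp
  ultimately have "vec n v = 0\<^sub>v n"
    using det_0_iff_vec_prod_zero det by (meson vec_carrier)
  then have "vec n v $ j = 0" using j by simp
  then show ?thesis using j by simp
qed

lemma det_nonzero_left_inverse:
  fixes F :: "nat \<Rightarrow> nat \<Rightarrow> real"
  assumes "det (mat n n (\<lambda>(i, j). F i j)) \<noteq> 0"
  shows "\<exists>R. \<forall>m<n. \<forall>j<n. (\<Sum>i<n. R m i * F i j) = (if m = j then 1 else 0)"
proof -
  let ?A = "mat n n (\<lambda>(i, j). F i j)"
  have "?A \<in> carrier_mat n n" by simp
  from det_non_zero_imp_unit[OF this assms, of "()"]
  obtain B where B: "B \<in> carrier_mat n n" and BA: "B * ?A = 1\<^sub>m n"
    unfolding Units_def ring_mat_def by auto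
  have "(\<Sum>i<n. B $$ (m, i) * F i j) = (if m = j then 1 else 0)" if "m < n" "j < n" for m j
  proof -
    have "(B * ?A) $$ (m, j) = (\<Sum>i<n. B $$ (m, i) * F i j)"
      using B that by (auto simp: scalar_prod_def lessThan_atLeast0 intro!: sum.cong)
    then show ?thesis using BA that by simp
  qed
  then show ?thesis by (intro exI[of _ "\<lambda>m i. B $$ (m, i)"] allI impI) simp
qed

lemma det_mat_diag: "det (mat_diag n d) = (\<Prod>j<n. d j)"
proof -
  have "upper_triangular (mat_diag n d)" by (auto simp: upper_triangular_def mat_diag_def)
  then have "det (mat_diag n d) = prod_list (diag_mat (mat_diag n d))"
    using det_upper_triangular mat_diag_dim by blast
  also have "diag_mat (mat_diag n d) = map d [0..<n]"
    by (auto simp: diag_mat_def mat_diag_def intro!: nth_equalityI)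
  finally show ?thesis by (simp add: prod.distinct_set_conv_list[symmetric] lessThan_atLeast0)
qed

lemma det_mat_scale_rows:
  fixes F :: "nat \<Rightarrow> nat \<Rightarrow> real"
  shows "det (mat n n (\<lambda>(i, j). r i * F i j)) = (\<Prod>i<n. r i) * det (mat n n (\<lambda>(i, j). F i j))"
proof -
  have "mat n n (\<lambda>(i, j). r i * F i j) = mat_diag n r * mat n n (\<lambda>(i, j). F i j)"
    by (subst mat_diag_mult_left[of _ n n]) (auto intro!: eq_matI)
  then show ?thesis by (simp add: det_mult[of _ n] det_mat_diag)
qed

lemma det_mat_sum_diag_product:
  fixes F G :: "nat \<Rightarrow> nat \<Rightarrow> real"
  shows "det (mat n n (\<lambda>(i, l). \<Sum>j<n. F i j * d j * G l j)) =
    det (mat n n (\<lambda>(i, j). F i j)) * (\<Prod>j<n. d j) * det (mat n n (\<lambda>(i, j). G i j))"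
proof -
  let ?F = "mat n n (\<lambda>(i, j). F i j)" and ?G = "mat n n (\<lambda>(i, j). G i j)"
  have "mat n n (\<lambda>(i, l). \<Sum>j<n. F i j * d j * G l j) = ?F * mat_diag n d * transpose_mat ?G"
    by (rule eq_matI)
      (auto simp: mat_diag_mult_right[of _ n n] scalar_prod_def lessThan_atLeast0 intro!: sum.cong)
  moreover have "?F * mat_diag n d \<in> carrier_mat n n" by (rule mult_carrier_mat[of _ n n]) auto
  ultimately show ?thesis
    by (simp add: det_mult[of _ n] det_mult[of ?F n "mat_diag n d"] det_mat_diag det_transpose[of ?G n])
qed

lemma monomial_permutation:
  fixes P :: "nat \<Rightarrow> nat \<Rightarrow> real"
  assumes rows: "\<forall>m<n. \<exists>j<n. P m j \<noteq> 0"
    and labels: "\<forall>m<n. \<forall>j<n. P m j \<noteq> 0 \<longrightarrow> e m = e' j" and inj: "inj_on e {..<n}"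
  shows "\<exists>\<rho>. bij_betw \<rho> {..<n} {..<n} \<and> (\<forall>m<n. \<forall>j<n. P m j \<noteq> 0 \<longleftrightarrow> j = \<rho> m)"
proof -
  define \<rho> where "\<rho> m = (SOME j. j < n \<and> P m j \<noteq> 0)" for m
  have \<rho>: "\<rho> m < n" "P m (\<rho> m) \<noteq> 0" if "m < n" for m
    using someI_ex[OF rows[rule_format, OF that]] unfolding \<rho>_def by blast+
  have col: "m = m'" if "m < n" "m' < n" "j < n" "P m j \<noteq> 0" "P m' j \<noteq> 0" for m m' j
  proof -
    have "e m = e' j" "e m' = e' j" using labels that by blast+
    then show ?thesis by (intro inj_onD[OF inj]) (use that in simp_all)
  qed
  have "inj_on \<rho> {..<n}"
  proof (rule inj_onI)
    fix m m' assume m: "m \<in> {..<n}" and m': "m' \<in> {..<n}" and eq: "\<rho> m = \<rho> m'"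
    have "P m' (\<rho> m) \<noteq> 0" using \<rho>(2) m' eq by simp
    then show "m = m'" using col[of m m' "\<rho> m"] \<rho> m m' by simp
  qed
  moreover have "\<rho> ` {..<n} \<subseteq> {..<n}" using \<rho>(1) by auto
  ultimately have bij: "bij_betw \<rho> {..<n} {..<n}"
    by (simp add: bij_betw_def endo_inj_surj)
  have "P m j \<noteq> 0 \<longleftrightarrow> j = \<rho> m" if m: "m < n" and j: "j < n" for m j
  proof
    assume P: "P m j \<noteq> 0"
    obtain m' where m': "m' < n" "j = \<rho> m'" using bij j by (metis bij_betw_def imageE lessThan_iff)
    then have "m = m'" using col[OF m m'(1) j P] \<rho>(2)[OF m'(1)] by simp
    then show "j = \<rho> m" using m' by simp
  next
    assume "j = \<rho> m"
    then show "P m j \<noteq> 0" using \<rho>(2)[OF m] by simp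
  qed
  with bij show ?thesis by blast
qed

lemma cross_ratio_eq:
  fixes \<beta>1 \<beta>2 a1 a2 b1 b2 c1 c2 d1 d2 :: real
  assumes nz: "a1 \<noteq> 0" "a2 \<noteq> 0" "b1 \<noteq> 0" "b2 \<noteq> 0" "c1 \<noteq> 0" "c2 \<noteq> 0" "d1 \<noteq> 0" "d2 \<noteq> 0"
    and a: "\<beta>1 * a1 / c1 = \<beta>2 * a2 / c2" and ne: "\<beta>1 * a1 / c1 \<noteq> 0"
    and b: "\<beta>1 * b1 / d1 = \<beta>2 * b2 / d2"
  shows "c1 * inverse d1 * d2 * inverse c2 = a1 * inverse b1 * b2 * inverse a2"
proof -
  have \<beta>: "\<beta>1 \<noteq> 0" "\<beta>2 \<noteq> 0" using ne a by auto
  have "\<beta>1 * a1 * c2 = \<beta>2 * a2 * c1" "\<beta>1 * b1 * d2 = \<beta>2 * b2 * d1"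
    using a b nz by (simp_all add: field_simps)
  then have "(\<beta>1 * a1 * c2) * (\<beta>2 * b2 * d1) = (\<beta>2 * a2 * c1) * (\<beta>1 * b1 * d2)"
    by simp
  then have "\<beta>1 * \<beta>2 * (a1 * c2 * b2 * d1) = \<beta>1 * \<beta>2 * (a2 * c1 * b1 * d2)"
    by (simp add: algebra_simps)
  then have "a1 * c2 * b2 * d1 = a2 * c1 * b1 * d2" using \<beta> by simp
  then show ?thesis using nz by (simp add: field_simps)
qed

section \<open>Paths and products of transition probabilities\<close>

lemma length_paths: "xs \<in> paths K n \<Longrightarrow> length xs = n"
  by (simp add: paths_def)

lemma finite_paths [simp]: "finite (paths K n)"
proof -
  have "paths K n = {xs. set xs \<subseteq> {..<K} \<and> length xs = n}" by (auto simp: paths_def)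
  then show ?thesis using finite_lists_length_eq[of "{..<K}" n] by simp
qed

lemma paths_0 [simp]: "paths K 0 = {[]}"
  by (auto simp: paths_def)

lemma paths_Suc: "paths K (Suc n) = (\<lambda>(xs, x). xs @ [x]) ` (paths K n \<times> {..<K})"
proof (rule Set.set_eqI)
  fix ys
  show "ys \<in> paths K (Suc n) \<longleftrightarrow> ys \<in> (\<lambda>(xs, x). xs @ [x]) ` (paths K n \<times> {..<K})"
  proof
    assume ys: "ys \<in> paths K (Suc n)"
    then obtain xs x where "ys = xs @ [x]" by (metis length_Suc_conv_rev length_paths)
    with ys show "ys \<in> (\<lambda>(xs, x). xs @ [x]) ` (paths K n \<times> {..<K})"
      by (auto simp: paths_def intro!: image_eqI[of _ _ "(xs, x)"])
  qed (auto simp: paths_def)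
qed

lemma sum_paths_Suc:
  "(\<Sum>xs\<in>paths K (Suc n). g xs) = (\<Sum>xs\<in>paths K n. \<Sum>x<K. g (xs @ [x]))"
proof -
  have "inj_on (\<lambda>(xs, x). xs @ [x]) (paths K n \<times> {..<K})"
    by (auto simp: inj_on_def)
  then show ?thesis
    by (simp add: paths_Suc sum.reindex sum.cartesian_product case_prod_unfold)
qed

lemma sum_paths_add:
  "(\<Sum>xs\<in>paths K (a + b). g xs) = (\<Sum>u\<in>paths K a. \<Sum>v\<in>paths K b. g (u @ v))"
proof (induction b arbitrary: g)
  case (Suc b)
  have "(\<Sum>xs\<in>paths K (a + Suc b). g xs) = (\<Sum>xs\<in>paths K (a + b). \<Sum>x<K. g (xs @ [x]))"
    using sum_paths_Suc[where K = K and n = "a + b" and g = g] by simp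
  also have "\<dots> = (\<Sum>u\<in>paths K a. \<Sum>v\<in>paths K (Suc b). g (u @ v))"
    by (simp add: Suc.IH sum_paths_Suc)
  finally show ?case .
qed simp

lemma append_in_paths [simp]: "u \<in> paths K a \<Longrightarrow> v \<in> paths K b \<Longrightarrow> u @ v \<in> paths K (a + b)"
  by (auto simp: paths_def)

lemma nth_paths_less: "xs \<in> paths K n \<Longrightarrow> i < n \<Longrightarrow> xs ! i < K"
  using nth_mem by (fastforce simp: paths_def)

lemma take_in_paths: "xs \<in> paths K n \<Longrightarrow> m \<le> n \<Longrightarrow> take m xs \<in> paths K m"
  by (auto simp: paths_def dest: in_set_takeD)

lemma drop_in_paths: "xs \<in> paths K n \<Longrightarrow> drop m xs \<in> paths K (n - m)"
  by (auto simp: paths_def dest: in_set_dropD)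

definition path_prod :: "(nat \<Rightarrow> nat \<Rightarrow> nat \<Rightarrow> real) \<Rightarrow> nat \<Rightarrow> nat \<Rightarrow> nat list \<Rightarrow> real" where
  "path_prod f m n xs = (\<Prod>t\<in>{Suc m..n}. f t (xs ! (t - 1)) (xs ! (t - 2)))"

definition stochastic :: "nat \<Rightarrow> (nat \<Rightarrow> nat \<Rightarrow> nat \<Rightarrow> real) \<Rightarrow> nat \<Rightarrow> nat \<Rightarrow> bool" where
  "stochastic K f a b \<longleftrightarrow> (\<forall>t\<in>{a..b}. \<forall>x'<K. (\<Sum>x<K. f t x x') = 1)"

lemma path_prod_empty [simp]: "path_prod f m m xs = 1"
  by (simp add: path_prod_def)

lemma path_prod_step: "path_prod f n (Suc n) xs = f (Suc n) (xs ! n) (xs ! (n - 1))"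
  by (simp add: path_prod_def)

lemma path_prod_prefix_cong:
  "\<forall>i<n. xs ! i = ys ! i \<Longrightarrow> path_prod f m n xs = path_prod f m n ys"
  unfolding path_prod_def by (intro prod.cong) auto

lemma path_prod_kernel_cong:
  "\<forall>t\<in>{Suc m..n}. f t = g t \<Longrightarrow> path_prod f m n xs = path_prod g m n xs"
  unfolding path_prod_def by (intro prod.cong) auto

lemma path_prod_split:
  assumes "m \<le> n" "n \<le> p"
  shows "path_prod f m p xs = path_prod f m n xs * path_prod f n p xs"
proof -
  have "{Suc m..p} = {Suc m..n} \<union> {Suc n..p}" using assms by auto
  then show ?thesis unfolding path_prod_def
    by (simp add: prod.union_disjoint[symmetric] ivl_disj_int_two)
qed

lemma sum_path_prod_extensions:
  assumes m: "1 \<le> m" and ys: "ys \<in> paths K m" and f: "stochastic K f (Suc m) (m + d)"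
  shows "(\<Sum>zs\<in>paths K d. path_prod f m (m + d) (ys @ zs)) = 1"
  using f
proof (induction d)
  case (Suc d)
  have step: "path_prod f m (Suc (m + d)) (ys @ zs @ [x])
      = path_prod f m (m + d) (ys @ zs) * f (Suc (m + d)) x ((ys @ zs) ! (m + d - 1))"
    if zs: "zs \<in> paths K d" for zs x
  proof -
    have len: "length ys = m" "length zs = d" using ys zs by (simp_all add: length_paths)
    have "path_prod f m (m + d) (ys @ zs @ [x]) = path_prod f m (m + d) (ys @ zs)"
      by (rule path_prod_prefix_cong) (auto simp: len nth_append)
    moreover have "path_prod f (m + d) (Suc (m + d)) (ys @ zs @ [x])
        = f (Suc (m + d)) x ((ys @ zs) ! (m + d - 1))"
      using len m by (simp add: path_prod_step nth_append)
    ultimately show ?thesis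
      using path_prod_split[of m "m + d" "Suc (m + d)" f "ys @ zs @ [x]"] by simp
  qed
  have kernel: "(\<Sum>x<K. f (Suc (m + d)) x ((ys @ zs) ! (m + d - 1))) = 1" if "zs \<in> paths K d" for zs
    using Suc.prems nth_paths_less[OF append_in_paths[OF ys that], of "m + d - 1"] m
    by (simp add: stochastic_def)
  have "(\<Sum>zs\<in>paths K (Suc d). path_prod f m (m + Suc d) (ys @ zs))
      = (\<Sum>zs\<in>paths K d. \<Sum>x<K. path_prod f m (Suc (m + d)) (ys @ zs @ [x]))"
    by (simp add: sum_paths_Suc)
  also have "\<dots> = (\<Sum>zs\<in>paths K d. path_prod f m (m + d) (ys @ zs))"
  proof (intro sum.cong refl)
    fix zs assume zs: "zs \<in> paths K d"
    have "(\<Sum>x<K. path_prod f m (Suc (m + d)) (ys @ zs @ [x]))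
        = path_prod f m (m + d) (ys @ zs) * (\<Sum>x<K. f (Suc (m + d)) x ((ys @ zs) ! (m + d - 1)))"
      by (simp only: step[OF zs] sum_distrib_left)
    then show "(\<Sum>x<K. path_prod f m (Suc (m + d)) (ys @ zs @ [x])) = path_prod f m (m + d) (ys @ zs)"
      by (simp only: kernel[OF zs] mult_1_right)
  qed
  also have "\<dots> = 1"
    using Suc by (simp add: stochastic_def)
  finally show ?case .
qed simp

lemma sum_path_prod_weighted_extensions:
  assumes ys: "ys \<in> paths K n" and n: "1 \<le> n" "n \<le> N" and f: "stochastic K f (Suc n) N"
  shows "(\<Sum>zs\<in>paths K (N - n). c ((ys @ zs) ! 0) * path_prod f 1 N (ys @ zs))
    = c (ys ! 0) * path_prod f 1 n ys"
proof -
  have len: "length ys = n" using ys by (simp add: length_paths)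
  have "c ((ys @ zs) ! 0) * path_prod f 1 N (ys @ zs) = c (ys ! 0) * path_prod f 1 n ys * path_prod f n (n + (N - n)) (ys @ zs)"
    for zs
  proof -
    have "path_prod f 1 n (ys @ zs) = path_prod f 1 n ys"
      by (rule path_prod_prefix_cong) (simp add: len nth_append)
    then show ?thesis
      using path_prod_split[of 1 n N f "ys @ zs"] n len by (simp add: nth_append)
  qed
  moreover have "stochastic K f (Suc n) (n + (N - n))" using f n by simp
  ultimately show ?thesis
    by (simp add: sum_distrib_left[symmetric] sum_path_prod_extensions[OF n(1) ys])
qed

lemma take_nth_nth_drop:
  assumes "k + 2 \<le> length xs"
  shows "xs = take k xs @ [xs ! k, xs ! (k + 1)] @ drop (k + 2) xs"
proof -
  have "drop k xs = [xs ! k, xs ! (k + 1)] @ drop (k + 2) xs"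
    using assms by (simp add: Cons_nth_drop_Suc)
  then show ?thesis by (metis append_take_drop_id)
qed

section \<open>Factorisation of the model probabilities\<close>

lemma Ppre_path_prod: "Ppre \<theta> j n xs d = init \<theta> j (xs ! 0) d * path_prod (trans0 \<theta> j) 1 n xs"
  unfolding Ppre_def path_prod_def by (simp add: numeral_2_eq_2)

lemma Ppre_append:
  assumes "length ys = n" "1 \<le> n" "n \<le> N"
  shows "Ppre \<theta> j N (ys @ zs) d = Ppre \<theta> j n ys d * path_prod (trans0 \<theta> j) n N (ys @ zs)"
proof -
  have "path_prod (trans0 \<theta> j) 1 n (ys @ zs) = path_prod (trans0 \<theta> j) 1 n ys"
    by (rule path_prod_prefix_cong) (simp add: assms(1) nth_append)
  then show ?thesis
    using path_prod_split[of 1 n N "trans0 \<theta> j" "ys @ zs"] assms by (simp add: Ppre_path_prod nth_append)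
qed

lemma Ppre_snoc:
  assumes "length xs = n" "1 \<le> n"
  shows "Ppre \<theta> j (Suc n) (xs @ [x]) d = Ppre \<theta> j n xs d * trans0 \<theta> j (Suc n) x (xs ! (n - 1))"
  using Ppre_append[OF assms, of "Suc n" \<theta> j "[x]" d] assms by (simp add: path_prod_step nth_append)

lemma Ppre_head:
  assumes "length \<xi>1 = k" "1 \<le> k"
  shows "Ppre \<theta> j (Suc k) (\<xi>1 @ [y]) d = Ppre \<theta> j k \<xi>1 d * q21 k \<theta> j y \<xi>1"
    and "Ppre \<theta> j (k + 2) (\<xi>1 @ [y, x]) d = Ppre \<theta> j k \<xi>1 d * q21 k \<theta> j y \<xi>1 * q32 k \<theta> j x y"
proof -
  show y: "Ppre \<theta> j (Suc k) (\<xi>1 @ [y]) d = Ppre \<theta> j k \<xi>1 d * q21 k \<theta> j y \<xi>1"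
    using Ppre_snoc[OF assms] by (simp add: q21_def)
  have "Ppre \<theta> j (Suc (Suc k)) ((\<xi>1 @ [y]) @ [x]) d = Ppre \<theta> j (Suc k) (\<xi>1 @ [y]) d * q32 k \<theta> j x y"
    using Ppre_snoc[of "\<xi>1 @ [y]" "Suc k"] assms by (simp add: q32_def nth_append)
  then show "Ppre \<theta> j (k + 2) (\<xi>1 @ [y, x]) d = Ppre \<theta> j k \<xi>1 d * q21 k \<theta> j y \<xi>1 * q32 k \<theta> j x y"
    by (simp add: y)
qed

lemma q43_path_prod:
  assumes "length ys = k + 2" "ys ! (k + 1) = x"
  shows "q43 T k \<theta> j \<xi>4 x = path_prod (trans0 \<theta> j) (k + 2) T (ys @ \<xi>4)"
  unfolding q43_def path_prod_def
proof (rule prod.cong)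
  fix t assume t: "t \<in> {Suc (k + 2)..T}"
  have "(ys @ \<xi>4) ! (t - 1) = \<xi>4 ! (t - (k + 3))"
    and "(ys @ \<xi>4) ! (t - 2) = (if t = k + 3 then x else \<xi>4 ! (t - (k + 4)))"
    using t assms by (auto simp: nth_append eval_nat_numeral)
  then show "trans0 \<theta> j t (\<xi>4 ! (t - (k + 3))) (if t = k + 3 then x else \<xi>4 ! (t - (k + 4))) =
      trans0 \<theta> j t ((ys @ \<xi>4) ! (t - 1)) ((ys @ \<xi>4) ! (t - 2))"
    by simp
qed simp

lemma Ppre_split_middle:
  assumes "length \<xi>1 = k" "1 \<le> k" "k + 2 \<le> T"
  shows "Ppre \<theta> j T (\<xi>1 @ [y, x] @ \<xi>4) d = Ppre \<theta> j (k + 2) (\<xi>1 @ [y, x]) d * q43 T k \<theta> j \<xi>4 x"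
  using Ppre_append[of "\<xi>1 @ [y, x]" "k + 2" T \<theta> j \<xi>4 d]
    q43_path_prod[of "\<xi>1 @ [y, x]" k x T \<theta> j \<xi>4] assms
  by (simp add: nth_append)

lemma valid_pmfs_stochastic_untreated:
  "valid_pmfs K J T0 T \<theta> \<Longrightarrow> j < J \<Longrightarrow> 2 \<le> a \<Longrightarrow> b \<le> T \<Longrightarrow> stochastic K (trans0 \<theta> j) a b"
  unfolding valid_pmfs_def stochastic_def by auto

definition trans_treated :: "nat \<Rightarrow> param \<Rightarrow> nat \<Rightarrow> nat \<Rightarrow> nat \<Rightarrow> nat \<Rightarrow> real" where
  "trans_treated T0 \<theta> j t = (if t \<le> T0 then trans0 \<theta> j t else trans1 \<theta> j t)"

lemma valid_pmfs_stochastic_treated: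
  "valid_pmfs K J T0 T \<theta> \<Longrightarrow> j < J \<Longrightarrow> 2 \<le> a \<Longrightarrow> b \<le> T \<Longrightarrow> stochastic K (trans_treated T0 \<theta> j) a b"
  unfolding valid_pmfs_def stochastic_def trans_treated_def by auto

lemma path_prod_trans_treated:
  "n \<le> T0 \<Longrightarrow> path_prod (trans_treated T0 \<theta> j) m n xs = path_prod (trans0 \<theta> j) m n xs"
  by (rule path_prod_kernel_cong) (auto simp: trans_treated_def)

lemma pWj_treated_path_prod:
  assumes "1 \<le> T0" "T0 \<le> T"
  shows "pWj T0 T \<theta> j xs 1 = init \<theta> j (xs ! 0) 1 * path_prod (trans_treated T0 \<theta> j) 1 T xs"
proof -
  have "path_prod (trans_treated T0 \<theta> j) T0 T xs = path_prod (trans1 \<theta> j) T0 T xs"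
    by (rule path_prod_kernel_cong) (auto simp: trans_treated_def)
  then have "path_prod (trans_treated T0 \<theta> j) 1 T xs
      = path_prod (trans0 \<theta> j) 1 T0 xs * path_prod (trans1 \<theta> j) T0 T xs"
    by (simp only: path_prod_split[OF assms] path_prod_trans_treated[OF order_refl])
  moreover have "(\<Prod>t\<in>{T0+1..T}. trans1 \<theta> j t (xs ! (t - 1)) (xs ! (t - 2))) = path_prod (trans1 \<theta> j) T0 T xs"
    by (simp add: path_prod_def)
  ultimately show ?thesis
    by (simp add: pWj_def Ppre_path_prod)
qed

lemma pW0cf_eq_Ppre:
  assumes "1 \<le> T0" "T0 \<le> T"
  shows "pW0cf T0 T \<theta> j xs = Ppre \<theta> j T xs 1"
  using path_prod_split[OF assms, of "trans0 \<theta> j" xs]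
  by (simp add: pW0cf_def Ppre_path_prod path_prod_def)

lemma sum_Ppre_extensions:
  assumes "valid_pmfs K J T0 T \<theta>" "j < J" "ys \<in> paths K n" "1 \<le> n" "n \<le> N" "N \<le> T"
  shows "(\<Sum>zs\<in>paths K (N - n). Ppre \<theta> j N (ys @ zs) d) = Ppre \<theta> j n ys d"
  using sum_path_prod_weighted_extensions[of ys K n N "trans0 \<theta> j" "\<lambda>x. init \<theta> j x d"]
    valid_pmfs_stochastic_untreated[OF assms(1,2)] assms(3-)
  by (simp add: Ppre_path_prod)

lemma sum_pWj_treated_extensions:
  assumes v: "valid_pmfs K J T0 T \<theta>" and j: "j < J" and ys: "ys \<in> paths K n"
    and n: "1 \<le> n" "n \<le> T0" and T0: "T0 \<le> T"
  shows "(\<Sum>zs\<in>paths K (T - n). pWj T0 T \<theta> j (ys @ zs) 1) = Ppre \<theta> j n ys 1"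
proof -
  have "1 \<le> T0" using n by simp
  then have "(\<Sum>zs\<in>paths K (T - n). pWj T0 T \<theta> j (ys @ zs) 1)
      = (\<Sum>zs\<in>paths K (T - n). init \<theta> j ((ys @ zs) ! 0) 1 * path_prod (trans_treated T0 \<theta> j) 1 T (ys @ zs))"
    by (intro sum.cong refl pWj_treated_path_prod[OF _ T0])
  also have "\<dots> = init \<theta> j (ys ! 0) 1 * path_prod (trans_treated T0 \<theta> j) 1 n ys"
    using valid_pmfs_stochastic_treated[OF v j] n T0
    by (intro sum_path_prod_weighted_extensions[OF ys]) simp_all
  also have "\<dots> = Ppre \<theta> j n ys 1"
    using n by (simp add: Ppre_path_prod path_prod_trans_treated)
  finally show ?thesis .
qed

lemma sum_q43:
  assumes "valid_pmfs K J T0 T \<theta>" "j < J" "x < K" "k + 2 \<le> T"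
  shows "(\<Sum>\<xi>4\<in>paths K (T - k - 2). q43 T k \<theta> j \<xi>4 x) = 1"
proof -
  let ?ys = "replicate (k + 2) x"
  have T: "k + 2 + (T - k - 2) = T" using assms(4) by simp
  have "(\<Sum>\<xi>4\<in>paths K (T - k - 2). q43 T k \<theta> j \<xi>4 x)
      = (\<Sum>\<xi>4\<in>paths K (T - k - 2). path_prod (trans0 \<theta> j) (k + 2) (k + 2 + (T - k - 2)) (?ys @ \<xi>4))"
    unfolding T by (intro sum.cong refl q43_path_prod) (simp_all add: nth_Cons')
  also have "\<dots> = 1"
  proof (rule sum_path_prod_extensions)
    show "?ys \<in> paths K (k + 2)" using assms(3) by (auto simp: paths_def)
    show "stochastic K (trans0 \<theta> j) (Suc (k + 2)) (k + 2 + (T - k - 2))"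
      using valid_pmfs_stochastic_untreated[OF assms(1,2)] T by simp
  qed simp
  finally show ?thesis .
qed

lemma Ppre_nonneg:
  assumes v: "valid_pmfs K J T0 T \<theta>" and j: "j < J" and xs: "xs \<in> paths K n"
    and n: "1 \<le> n" "n \<le> T" and d: "d \<in> {0, 1}"
  shows "0 \<le> Ppre \<theta> j n xs d"
proof -
  have "0 \<le> init \<theta> j (xs ! 0) d"
    using nth_paths_less[OF xs, of 0] n v j d unfolding valid_pmfs_def by auto
  moreover have "0 \<le> path_prod (trans0 \<theta> j) 1 n xs"
    unfolding path_prod_def
  proof (rule prod_nonneg)
    fix t assume t: "t \<in> {Suc 1..n}"
    then have "xs ! (t - 1) < K" "xs ! (t - 2) < K" using nth_paths_less[OF xs] by auto
    then show "0 \<le> trans0 \<theta> j t (xs ! (t - 1)) (xs ! (t - 2))"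
      using v j t n unfolding valid_pmfs_def by auto
  qed
  ultimately show ?thesis by (simp add: Ppre_path_prod)
qed

lemma overlap_treated_vanishes:
  assumes m: "model K J T0 T \<epsilon> \<theta>" and eps: "\<epsilon> > 0" and j: "j < J"
    and xs: "xs \<in> paths K n" and n: "1 \<le> n" "n \<le> T0" "T0 \<le> T"
    and untreated: "Ppre \<theta> j n xs 0 = 0"
  shows "Ppre \<theta> j n xs 1 = 0"
proof -
  have v: "valid_pmfs K J T0 T \<theta>" and ov: "overlap K J T0 \<epsilon> \<theta>"
    using m by (simp_all add: model_def)
  have nonneg: "0 \<le> Ppre \<theta> j T0 (xs @ zs) d" if "zs \<in> paths K (T0 - n)" "d \<in> {0, 1}" for zs d
    using Ppre_nonneg[OF v j _ _ _ that(2)] append_in_paths[OF xs that(1)] n by simp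
  have ext: "Ppre \<theta> j n xs d = (\<Sum>zs\<in>paths K (T0 - n). Ppre \<theta> j T0 (xs @ zs) d)" for d
    using sum_Ppre_extensions[OF v j xs n] by simp
  have "Ppre \<theta> j T0 (xs @ zs) 1 = 0" if zs: "zs \<in> paths K (T0 - n)" for zs
  proof -
    have zero: "Ppre \<theta> j T0 (xs @ zs) 0 = 0"
      using untreated ext[of 0] sum_nonneg_eq_0_iff[of "paths K (T0 - n)" "\<lambda>zs. Ppre \<theta> j T0 (xs @ zs) 0"]
        nonneg zs by simp
    have "xs @ zs \<in> paths K T0" using append_in_paths[OF xs zs] n by simp
    then have "Ppre \<theta> j T0 (xs @ zs) 1
        \<le> (1 - \<epsilon>) * (Ppre \<theta> j T0 (xs @ zs) 0 + Ppre \<theta> j T0 (xs @ zs) 1)"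
      using ov j unfolding overlap_def by blast
    then have "\<epsilon> * Ppre \<theta> j T0 (xs @ zs) 1 \<le> 0"
      using zero by (simp add: algebra_simps)
    then show ?thesis
      using nonneg[OF zs, of 1] eps by (simp add: mult_le_0_iff)
  qed
  then show ?thesis using ext[of 1] by simp
qed

definition joint :: "param \<Rightarrow> nat \<Rightarrow> nat \<Rightarrow> nat list \<Rightarrow> nat \<Rightarrow> real" where
  "joint \<theta> j n xs d = mixw \<theta> j * Ppre \<theta> j n xs d"

lemma pW_untreated: "pW J T0 T \<theta> xs 0 = (\<Sum>j<J. joint \<theta> j T xs 0)"
  by (simp add: pW_def pWj_def joint_def)

lemma joint_head:
  assumes "length \<xi>1 = k" "1 \<le> k"
  shows "joint \<theta> j (Suc k) (\<xi>1 @ [y]) d = joint \<theta> j k \<xi>1 d * q21 k \<theta> j y \<xi>1"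
    and "joint \<theta> j (k + 2) (\<xi>1 @ [y, x]) d = joint \<theta> j (Suc k) (\<xi>1 @ [y]) d * q32 k \<theta> j x y"
  using Ppre_head[OF assms] by (simp_all add: joint_def)

lemma joint_split_middle:
  assumes "length \<xi>1 = k" "1 \<le> k" "k + 2 \<le> T"
  shows "joint \<theta> j T (\<xi>1 @ [y, x] @ \<xi>4) d = joint \<theta> j (k + 2) (\<xi>1 @ [y, x]) d * q43 T k \<theta> j \<xi>4 x"
  using Ppre_split_middle[OF assms] by (simp add: joint_def)

definition Lentry :: "nat \<Rightarrow> nat \<Rightarrow> param \<Rightarrow> (nat \<Rightarrow> nat list) \<Rightarrow> nat \<Rightarrow> nat \<Rightarrow> nat \<Rightarrow> real" where
  "Lentry T k \<theta> b x l j = (if l = 0 then 1 else q43 T k \<theta> j (b (l - 1)) x)"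

lemma Lmat_Lentry: "Lmat J T k \<theta> b x = mat J J (\<lambda>(l, j). Lentry T k \<theta> b x l j)"
  by (simp add: Lmat_def Lentry_def)

lemma untreated_moment:
  assumes v: "valid_pmfs K J T0 T \<theta>" and \<xi>1: "length \<xi>1 = k" "1 \<le> k" and T: "k + 2 \<le> T"
    and x: "x < K"
  shows "(\<Sum>j<J. joint \<theta> j (k + 2) (\<xi>1 @ [y, x]) 0 * Lentry T k \<theta> b x l j) =
    (if l = 0 then (\<Sum>\<xi>4\<in>paths K (T - k - 2). pW J T0 T \<theta> (\<xi>1 @ [y, x] @ \<xi>4) 0)
     else pW J T0 T \<theta> (\<xi>1 @ [y, x] @ b (l - 1)) 0)"
proof -
  have path: "pW J T0 T \<theta> (\<xi>1 @ [y, x] @ \<xi>4) 0 =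
      (\<Sum>j<J. joint \<theta> j (k + 2) (\<xi>1 @ [y, x]) 0 * q43 T k \<theta> j \<xi>4 x)" for \<xi>4
    by (simp only: pW_untreated joint_split_middle[OF \<xi>1 T])
  have "(\<Sum>\<xi>4\<in>paths K (T - k - 2). pW J T0 T \<theta> (\<xi>1 @ [y, x] @ \<xi>4) 0)
      = (\<Sum>j<J. joint \<theta> j (k + 2) (\<xi>1 @ [y, x]) 0 * (\<Sum>\<xi>4\<in>paths K (T - k - 2). q43 T k \<theta> j \<xi>4 x))"
    unfolding path by (subst sum.swap) (simp add: sum_distrib_left)
  also have "\<dots> = (\<Sum>j<J. joint \<theta> j (k + 2) (\<xi>1 @ [y, x]) 0)"
    using sum_q43[OF v _ x T] by simp
  finally have first: "(\<Sum>\<xi>4\<in>paths K (T - k - 2). pW J T0 T \<theta> (\<xi>1 @ [y, x] @ \<xi>4) 0)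
      = (\<Sum>j<J. joint \<theta> j (k + 2) (\<xi>1 @ [y, x]) 0)" .
  show ?thesis
    unfolding first unfolding path by (simp add: Lentry_def)
qed

lemma treated_moment:
  assumes v: "valid_pmfs K J T0 T \<theta>" and \<xi>1: "\<xi>1 \<in> paths K k" and x: "x < K"
    and k: "1 \<le> k" "k + 1 \<le> T0" "T0 \<le> T"
  shows "(\<Sum>zs\<in>paths K (T - (k + 1)). pW J T0 T \<theta> ((\<xi>1 @ [x]) @ zs) 1)
    = (\<Sum>j<J. joint \<theta> j k \<xi>1 1 * q21 k \<theta> j x \<xi>1)"
proof -
  have p: "\<xi>1 @ [x] \<in> paths K (k + 1)" using \<xi>1 x by (auto simp: paths_def)
  have "(\<Sum>zs\<in>paths K (T - (k + 1)). pW J T0 T \<theta> ((\<xi>1 @ [x]) @ zs) 1)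
      = (\<Sum>j<J. mixw \<theta> j * (\<Sum>zs\<in>paths K (T - (k + 1)). pWj T0 T \<theta> j ((\<xi>1 @ [x]) @ zs) 1))"
    unfolding pW_def by (simp add: sum.swap[of _ "paths K _"] sum_distrib_left)
  also have "\<dots> = (\<Sum>j<J. joint \<theta> j (Suc k) (\<xi>1 @ [x]) 1)"
    using sum_pWj_treated_extensions[OF v _ p] k by (simp add: joint_def)
  finally show ?thesis
    using joint_head(1)[OF length_paths[OF \<xi>1] k(1)] by simp
qed

lemma det_Lbar_nonzero:
  assumes "det (Lbar J k \<theta> a y) \<noteq> 0" and "\<forall>i<J. length (a i) = k" and "1 \<le> k"
  shows "det (mat J J (\<lambda>(i, j). joint \<theta> j (Suc k) (a i @ [y]) 0)) \<noteq> 0"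
proof -
  define r where "r i = inverse (\<Sum>m<J. joint \<theta> m k (a i) 0)" for i
  have "lambda1 J k \<theta> j y (a i) = r i * joint \<theta> j (Suc k) (a i @ [y]) 0" if "i < J" for i j
  proof -
    have "length (a i) = k" using assms(2) that by simp
    then show ?thesis
      by (simp add: lambda1_def tau_def r_def joint_def Ppre_head(1)[OF _ assms(3)] divide_inverse mult_ac)
  qed
  then have "Lbar J k \<theta> a y = mat J J (\<lambda>(i, j). r i * joint \<theta> j (Suc k) (a i @ [y]) 0)"
    by (intro eq_matI) (simp_all add: Lbar_def)
  then show ?thesis
    using assms(1) by (simp add: det_mat_scale_rows)
qed

lemma model_mixw_pos: "model K J T0 T \<epsilon> \<theta> \<Longrightarrow> 0 < \<epsilon> \<Longrightarrow> j < J \<Longrightarrow> 0 < mixw \<theta> j"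
  unfolding model_def in_Theta_def by force

lemma joint_treated_vanishes:
  assumes "model K J T0 T \<epsilon> \<theta>" "0 < \<epsilon>" "j < J" "xs \<in> paths K n" "1 \<le> n" "n \<le> T0" "T0 \<le> T"
    and "joint \<theta> j n xs 0 = 0"
  shows "joint \<theta> j n xs 1 = 0"
  using overlap_treated_vanishes[OF assms(1-7)] model_mixw_pos[OF assms(1-3)] assms(8)
  by (simp add: joint_def)

lemma prD1_eq_sum_Ppre:
  assumes v: "valid_pmfs K J T0 T \<theta>" and j: "j < J" and k: "1 \<le> k" "k \<le> T"
  shows "prD1 K T0 \<theta> j = (\<Sum>\<xi>1\<in>paths K k. Ppre \<theta> j k \<xi>1 1)"
proof -
  have "(\<Sum>\<xi>1\<in>paths K (1 + (k - 1)). Ppre \<theta> j k \<xi>1 1)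
      = (\<Sum>u\<in>paths K 1. \<Sum>w\<in>paths K (k - 1). Ppre \<theta> j k (u @ w) 1)"
    by (rule sum_paths_add)
  also have "\<dots> = (\<Sum>u\<in>paths K 1. Ppre \<theta> j 1 u 1)"
    using sum_Ppre_extensions[OF v j _ order_refl k(1) k(2), where d = 1] by simp
  also have "\<dots> = prD1 K T0 \<theta> j"
    using sum_paths_Suc[where K = K and n = 0 and g = "\<lambda>u. Ppre \<theta> j 1 u 1"]
    by (simp add: prD1_def Ppre_path_prod)
  finally show ?thesis using k by simp
qed

text \<open>Where the untreated history has weight zero, overlap makes the treated weight vanish too,
  so the identity also holds there with the convention x / 0 = 0.\<close>

lemma mixw_pW0cf_eq:
  assumes m: "model K J T0 T \<epsilon> \<theta>" and eps: "0 < \<epsilon>" and j: "j < J" and xs: "xs \<in> paths K T"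
    and k: "1 \<le> k" "k \<le> T0" "T0 \<le> T"
  shows "mixw \<theta> j * pW0cf T0 T \<theta> j xs
    = joint \<theta> j k (take k xs) 1 * joint \<theta> j T xs 0 / joint \<theta> j k (take k xs) 0"
proof -
  have kT: "k \<le> T" using k by simp
  have tk: "take k xs \<in> paths K k" using take_in_paths[OF xs kT] .
  have split: "joint \<theta> j T xs d = joint \<theta> j k (take k xs) d * path_prod (trans0 \<theta> j) k T xs" for d
    using Ppre_append[of "take k xs" k T \<theta> j "drop k xs" d] length_paths[OF xs] k kT
    by (simp add: joint_def)
  have cf: "mixw \<theta> j * pW0cf T0 T \<theta> j xs = joint \<theta> j T xs 1"
    using pW0cf_eq_Ppre[of T0 T \<theta> j xs] k by (simp add: joint_def)
  show ?thesis
  proof (cases "joint \<theta> j k (take k xs) 0 = 0")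
    case True
    then have "joint \<theta> j k (take k xs) 1 = 0"
      using joint_treated_vanishes[OF m eps j tk k] by simp
    then show ?thesis using True cf split[of 1] by simp
  next
    case False
    then show ?thesis using cf split[of 0] split[of 1] by simp
  qed
qed

lemma att_observable_form:
  assumes v: "valid_pmfs K J T0 T \<theta>" and T0: "1 \<le> T0" "T0 \<le> T"
  shows "att K J T0 T \<theta> t c =
    ((\<Sum>xs\<in>paths K T. if xs ! (t - 1) = c then pW J T0 T \<theta> xs 1 else 0)
     - (\<Sum>xs\<in>paths K T. if xs ! (t - 1) = c then (\<Sum>j<J. mixw \<theta> j * pW0cf T0 T \<theta> j xs) else 0))
    / (\<Sum>j<J. mixw \<theta> j * prD1 K T0 \<theta> j)" (is "_ = ?rhs")
proof -
  define S where "S = (\<Sum>m<J. mixw \<theta> m * prD1 K T0 \<theta> m)"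
  define E1 where "E1 j = (\<Sum>xs\<in>paths K T. if xs ! (t - 1) = c then pWj T0 T \<theta> j xs 1 else 0)" for j
  define E0 where "E0 j = (\<Sum>xs\<in>paths K T. if xs ! (t - 1) = c then pW0cf T0 T \<theta> j xs else 0)" for j
  have summand: "postZ K J T0 \<theta> j * ltatt K T0 T \<theta> j t c = mixw \<theta> j * (E1 j - E0 j) / S" if j: "j < J" for j
  proof (cases "prD1 K T0 \<theta> j = 0")
    case True
    have "init \<theta> j x 1 = 0" if "x < K" for x
      using True v j that sum_nonneg_eq_0_iff[of "{..<K}" "\<lambda>x. init \<theta> j x 1"]
      unfolding prD1_def valid_pmfs_def by auto
    then have "Ppre \<theta> j T0 xs 1 = 0" if "xs \<in> paths K T" for xs
      using nth_paths_less[OF that, of 0] T0 by (simp add: Ppre_path_prod)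
    then have "E1 j = 0" "E0 j = 0"
      unfolding E1_def E0_def by (auto intro!: sum.neutral simp: pWj_def pW0cf_def)
    then show ?thesis unfolding ltatt_def E1_def[symmetric] E0_def[symmetric] using True by simp
  next
    case False
    then show ?thesis unfolding postZ_def ltatt_def E1_def[symmetric] E0_def[symmetric] S_def[symmetric]
      by (cases "S = 0") (simp_all add: field_simps)
  qed
  have mix: "(\<Sum>j<J. mixw \<theta> j * (\<Sum>xs\<in>paths K T. if xs ! (t - 1) = c then f j xs else 0))
      = (\<Sum>xs\<in>paths K T. if xs ! (t - 1) = c then (\<Sum>j<J. mixw \<theta> j * f j xs) else 0)" for f
    by (simp add: sum_distrib_left if_distrib sum.swap[of _ "{..<J}"] sum.If_cases)
  have "att K J T0 T \<theta> t c = ((\<Sum>j<J. mixw \<theta> j * E1 j) - (\<Sum>j<J. mixw \<theta> j * E0 j)) / S"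
    by (simp add: att_def summand sum_divide_distrib[symmetric] right_diff_distrib sum_subtractf)
  also have "\<dots> = ?rhs"
    by (simp only: E1_def E0_def mix S_def pW_def)
  finally show ?thesis .
qed

section \<open>Observationally equivalent parameters\<close>

locale observationally_equivalent =
  fixes K J T0 T k :: nat and \<epsilon> :: real and s p :: param
  assumes k_pos: "1 \<le> k" and k_T: "k + 3 \<le> T" and k_T0: "k + 1 \<le> T0" and T0_T: "T0 \<le> T"
    and eps_pos: "0 < \<epsilon>"
    and model_s: "model K J T0 T \<epsilon> s" and model_p: "model K J T0 T \<epsilon> p"
    and ID_s: "ID K J T k s"
    and same_law: "\<forall>xs\<in>paths K T. \<forall>d\<in>{0, 1}. pW J T0 T p xs d = pW J T0 T s xs d"
begin

abbreviation head :: "param \<Rightarrow> nat \<Rightarrow> nat list \<Rightarrow> nat \<Rightarrow> nat \<Rightarrow> real" where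
  "head \<theta> j \<xi>1 y x \<equiv> joint \<theta> j (k + 2) (\<xi>1 @ [y, x]) 0"

abbreviation Lbar_joint :: "param \<Rightarrow> (nat \<Rightarrow> nat list) \<Rightarrow> nat \<Rightarrow> nat \<Rightarrow> nat \<Rightarrow> real" where
  "Lbar_joint \<theta> a y i j \<equiv> joint \<theta> j (Suc k) (a i @ [y]) 0"

abbreviation Lent :: "param \<Rightarrow> (nat \<Rightarrow> nat list) \<Rightarrow> nat \<Rightarrow> nat \<Rightarrow> nat \<Rightarrow> real" where
  "Lent \<theta> b x l j \<equiv> Lentry T k \<theta> b x l j"

lemma valid_pmfs_s: "valid_pmfs K J T0 T s" and valid_pmfs_p: "valid_pmfs K J T0 T p"
  using model_s model_p by (simp_all add: model_def)

lemma q32_pos: "j < J \<Longrightarrow> x < K \<Longrightarrow> y < K \<Longrightarrow> 0 < q32 k s j x y"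
  using ID_s unfolding ID_def ID_b_def by blast

lemma head_factor: "\<xi>1 \<in> paths K k \<Longrightarrow> head \<theta> j \<xi>1 y x = joint \<theta> j (Suc k) (\<xi>1 @ [y]) 0 * q32 k \<theta> j x y"
  using joint_head(2)[OF length_paths k_pos] by simp

lemma middle_in_paths:
  "\<xi>1 \<in> paths K k \<Longrightarrow> y < K \<Longrightarrow> x < K \<Longrightarrow> \<xi>4 \<in> paths K (T - k - 2) \<Longrightarrow> \<xi>1 @ [y, x] @ \<xi>4 \<in> paths K T"
  using k_T by (auto simp: paths_def)

lemma moments_agree:
  assumes \<xi>1: "\<xi>1 \<in> paths K k" and y: "y < K" and x: "x < K"
    and b: "\<forall>i<J - 1. b i \<in> paths K (T - k - 2)" and l: "l < J"
  shows "(\<Sum>j<J. head p j \<xi>1 y x * Lent p b x l j) = (\<Sum>j<J. head s j \<xi>1 y x * Lent s b x l j)"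
proof -
  have T: "k + 2 \<le> T" using k_T by simp
  have obs: "pW J T0 T p (\<xi>1 @ [y, x] @ \<xi>4) 0 = pW J T0 T s (\<xi>1 @ [y, x] @ \<xi>4) 0"
    if "\<xi>4 \<in> paths K (T - k - 2)" for \<xi>4
    using same_law middle_in_paths[OF \<xi>1 y x that] by simp
  have "l \<noteq> 0 \<Longrightarrow> b (l - 1) \<in> paths K (T - k - 2)" using b l by simp
  then show ?thesis
    using untreated_moment[OF valid_pmfs_p length_paths[OF \<xi>1] k_pos T x]
      untreated_moment[OF valid_pmfs_s length_paths[OF \<xi>1] k_pos T x] obs
    by simp
qed

lemma factored_moments_agree:
  assumes a: "\<forall>i<J. a i \<in> paths K k" and b: "\<forall>i<J - 1. b i \<in> paths K (T - k - 2)"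
    and y: "y < K" and x: "x < K" and i: "i < J" and l: "l < J"
  shows "(\<Sum>j<J. Lbar_joint p a y i j * q32 k p j x y * Lent p b x l j)
    = (\<Sum>j<J. Lbar_joint s a y i j * q32 k s j x y * Lent s b x l j)"
  using moments_agree[OF a[rule_format, OF i] y x b l] head_factor[OF a[rule_format, OF i]]
  by simp

lemma nonsingular_transfer:
  assumes a: "\<forall>i<J. a i \<in> paths K k" and b: "\<forall>i<J - 1. b i \<in> paths K (T - k - 2)"
    and y: "y < K" and x: "x < K"
    and dA: "det (mat J J (\<lambda>(i, j). Lbar_joint s a y i j)) \<noteq> 0"
    and dL: "det (Lmat J T k s b x) \<noteq> 0"
  shows "det (Lmat J T k p b x) \<noteq> 0" and "\<forall>j<J. q32 k p j x y \<noteq> 0"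
proof -
  have "mat J J (\<lambda>(i, l). \<Sum>j<J. Lbar_joint p a y i j * q32 k p j x y * Lent p b x l j)
      = mat J J (\<lambda>(i, l). \<Sum>j<J. Lbar_joint s a y i j * q32 k s j x y * Lent s b x l j)"
    using factored_moments_agree[OF a b y x] by (intro eq_matI) simp_all
  moreover have "(\<Prod>j<J. q32 k s j x y) \<noteq> 0"
    using q32_pos x y by (simp add: less_imp_neq[symmetric])
  then have "det (mat J J (\<lambda>(i, l). \<Sum>j<J. Lbar_joint s a y i j * q32 k s j x y * Lent s b x l j)) \<noteq> 0"
    using dA dL by (simp add: det_mat_sum_diag_product Lmat_Lentry)
  ultimately have "det (mat J J (\<lambda>(i, l). \<Sum>j<J. Lbar_joint p a y i j * q32 k p j x y * Lent p b x l j)) \<noteq> 0"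
    by simp
  then have "det (mat J J (\<lambda>(i, j). Lbar_joint p a y i j)) * (\<Prod>j<J. q32 k p j x y)
      * det (mat J J (\<lambda>(l, j). Lent p b x l j)) \<noteq> 0"
    by (simp only: det_mat_sum_diag_product not_False_eq_True)
  then show "det (Lmat J T k p b x) \<noteq> 0" and "\<forall>j<J. q32 k p j x y \<noteq> 0"
    by (auto simp: Lmat_Lentry)
qed

definition transfers :: "(nat \<Rightarrow> nat \<Rightarrow> real) \<Rightarrow> (nat \<Rightarrow> nat list) \<Rightarrow> nat \<Rightarrow> bool" where
  "transfers B b y \<longleftrightarrow> (\<forall>x<K. \<forall>m<J. \<forall>l<J.
     (\<Sum>j<J. B m j * q32 k p j x y * Lent p b x l j) = q32 k s m x y * Lent s b x l m)"

lemma transfer_matrix: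
  assumes a: "\<forall>i<J. a i \<in> paths K k" and b: "\<forall>i<J - 1. b i \<in> paths K (T - k - 2)"
    and y: "y < K" and dA: "det (mat J J (\<lambda>(i, j). Lbar_joint s a y i j)) \<noteq> 0"
  shows "\<exists>B. transfers B b y"
proof -
  obtain R where R: "\<forall>m<J. \<forall>j<J. (\<Sum>i<J. R m i * Lbar_joint s a y i j) = (if m = j then 1 else 0)"
    using det_nonzero_left_inverse[OF dA] by blast
  have swap: "(\<Sum>j<J. (\<Sum>i<J. R m i * Lbar_joint \<theta> a y i j) * q32 k \<theta> j x y * Lent \<theta> b x l j)
      = (\<Sum>i<J. R m i * (\<Sum>j<J. Lbar_joint \<theta> a y i j * q32 k \<theta> j x y * Lent \<theta> b x l j))" for \<theta> m x l
  proof -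
    have "(\<Sum>j<J. (\<Sum>i<J. R m i * Lbar_joint \<theta> a y i j) * q32 k \<theta> j x y * Lent \<theta> b x l j)
        = (\<Sum>j<J. \<Sum>i<J. R m i * (Lbar_joint \<theta> a y i j * q32 k \<theta> j x y * Lent \<theta> b x l j))"
      by (simp add: sum_distrib_right mult.assoc)
    also have "\<dots> = (\<Sum>i<J. \<Sum>j<J. R m i * (Lbar_joint \<theta> a y i j * q32 k \<theta> j x y * Lent \<theta> b x l j))"
      by (rule sum.swap)
    finally show ?thesis by (simp add: sum_distrib_left)
  qed
  have "(\<Sum>j<J. (\<Sum>i<J. R m i * Lbar_joint p a y i j) * q32 k p j x y * Lent p b x l j)
      = q32 k s m x y * Lent s b x l m" if x: "x < K" and m: "m < J" and l: "l < J" for x m l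
  proof -
    have "(\<Sum>j<J. (\<Sum>i<J. R m i * Lbar_joint p a y i j) * q32 k p j x y * Lent p b x l j)
        = (\<Sum>j<J. (\<Sum>i<J. R m i * Lbar_joint s a y i j) * q32 k s j x y * Lent s b x l j)"
      unfolding swap using factored_moments_agree[OF a b y x _ l] by simp
    also have "\<dots> = (\<Sum>j<J. if j = m then q32 k s j x y * Lent s b x l j else 0)"
      using R m by (intro sum.cong refl) auto
    finally show ?thesis using m by simp
  qed
  then show ?thesis
    unfolding transfers_def by (intro exI[of _ "\<lambda>m j. \<Sum>i<J. R m i * Lbar_joint p a y i j"] allI impI)
qed

lemma transfer_ratio_unique:
  assumes x: "x < K" and y1: "y1 < K" and y2: "y2 < K"
    and B1: "transfers B1 b y1" and B2: "transfers B2 b y2"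
    and dL: "det (Lmat J T k p b x) \<noteq> 0" and m: "m < J" and j: "j < J"
  shows "B1 m j * q32 k p j x y1 / q32 k s m x y1 = B2 m j * q32 k p j x y2 / q32 k s m x y2"
proof -
  have normalized: "(\<Sum>j<J. B m j * q32 k p j x y / q32 k s m x y * Lent p b x l j) = Lent s b x l m"
    if "transfers B b y" and "y < K" "l < J" for B y l
  proof -
    have "(\<Sum>j<J. B m j * q32 k p j x y / q32 k s m x y * Lent p b x l j)
        = (\<Sum>j<J. B m j * q32 k p j x y * Lent p b x l j) / q32 k s m x y"
      by (simp add: sum_divide_distrib)
    then show ?thesis
      using that(1)[unfolded transfers_def, rule_format, OF x m that(3)] q32_pos[OF m x \<open>y < K\<close>]
      by simp
  qed
  have "\<forall>l<J. (\<Sum>j<J. Lent p b x l j * (B1 m j * q32 k p j x y1 / q32 k s m x y1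
      - B2 m j * q32 k p j x y2 / q32 k s m x y2)) = 0"
    using normalized[OF B1 y1] normalized[OF B2 y2]
    by (simp add: algebra_simps sum_subtractf)
  from det_nonzero_imp_kernel_zero[OF dL[unfolded Lmat_Lentry] this j] show ?thesis by simp
qed

lemma transfer_matrix_monomial:
  assumes a: "\<forall>i<J. a i \<in> paths K k" and b: "\<forall>i<J - 1. b i \<in> paths K (T - k - 2)"
    and x: "x < K" and z: "z < K" and y1: "y1 < K" and y2: "y2 < K"
    and B1: "transfers B1 b y1" and B2: "transfers B2 b y2"
    and dA1: "det (mat J J (\<lambda>(i, j). Lbar_joint s a y1 i j)) \<noteq> 0"
    and dA2: "det (mat J J (\<lambda>(i, j). Lbar_joint s a y2 i j)) \<noteq> 0"
    and dLx: "det (Lmat J T k s b x) \<noteq> 0" and dLz: "det (Lmat J T k s b z) \<noteq> 0"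
    and inj: "inj_on (eigen_entry k s x y1 y2 z) {..<J}"
  shows "\<exists>\<rho>. bij_betw \<rho> {..<J} {..<J} \<and> (\<forall>m<J. \<forall>j<J. B1 m j \<noteq> 0 \<longleftrightarrow> j = \<rho> m)"
proof (rule monomial_permutation[OF _ _ inj])
  show "\<forall>m<J. \<exists>j<J. B1 m j \<noteq> 0"
  proof (intro allI impI)
    fix m assume m: "m < J"
    have sum: "(\<Sum>j<J. B1 m j * q32 k p j x y1) = q32 k s m x y1"
      using B1[unfolded transfers_def, rule_format, OF x m, of 0] m by (simp add: Lentry_def)
    show "\<exists>j<J. B1 m j \<noteq> 0"
    proof (rule ccontr)
      assume "\<not> (\<exists>j<J. B1 m j \<noteq> 0)"
      then have "(\<Sum>j<J. B1 m j * q32 k p j x y1) = 0" by (intro sum.neutral) simp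
      then show False using sum q32_pos[OF m x y1] by simp
    qed
  qed
  show "\<forall>m<J. \<forall>j<J. B1 m j \<noteq> 0 \<longrightarrow> eigen_entry k s x y1 y2 z m = eigen_entry k p x y1 y2 z j"
  proof (intro allI impI)
    fix m j assume m: "m < J" and j: "j < J" and nz: "B1 m j \<noteq> 0"
    note pos = q32_pos[OF m]
    note x1 = nonsingular_transfer[OF a b y1 x dA1 dLx] and x2 = nonsingular_transfer[OF a b y2 x dA2 dLx]
      and z1 = nonsingular_transfer[OF a b y1 z dA1 dLz] and z2 = nonsingular_transfer[OF a b y2 z dA2 dLz]
    show "eigen_entry k s x y1 y2 z m = eigen_entry k p x y1 y2 z j"
      unfolding eigen_entry_def
    proof (rule cross_ratio_eq)
      show "B1 m j * q32 k p j x y1 / q32 k s m x y1 = B2 m j * q32 k p j x y2 / q32 k s m x y2"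
        by (rule transfer_ratio_unique[OF x y1 y2 B1 B2 x1(1) m j])
      show "B1 m j * q32 k p j z y1 / q32 k s m z y1 = B2 m j * q32 k p j z y2 / q32 k s m z y2"
        by (rule transfer_ratio_unique[OF z y1 y2 B1 B2 z1(1) m j])
      show "B1 m j * q32 k p j x y1 / q32 k s m x y1 \<noteq> 0"
        using nz x1(2) j pos[OF x y1] by simp
    qed (use x1(2) x2(2) z1(2) z2(2) j pos x z y1 y2 in \<open>auto simp: less_imp_neq[symmetric]\<close>)
  qed
qed

lemma Lentry_aligned:
  assumes y1: "y1 < K" and x: "x < K"
    and B1: "transfers B1 b y1"
    and mono: "\<forall>m<J. \<forall>j<J. B1 m j \<noteq> 0 \<longleftrightarrow> j = \<rho> m" and \<rho>: "bij_betw \<rho> {..<J} {..<J}"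
    and m: "m < J" and l: "l < J"
  shows "Lent p b x l (\<rho> m) = Lent s b x l m"
proof -
  have \<rho>m: "\<rho> m < J" using \<rho> m by (auto dest: bij_betw_apply)
  have single: "B1 m (\<rho> m) * q32 k p (\<rho> m) x y1 * Lent p b x l' (\<rho> m) = q32 k s m x y1 * Lent s b x l' m"
    if "l' < J" for l'
  proof -
    have "(\<Sum>j<J. B1 m j * q32 k p j x y1 * Lent p b x l' j)
        = (\<Sum>j<J. if j = \<rho> m then B1 m j * q32 k p j x y1 * Lent p b x l' j else 0)"
      using mono m by (intro sum.cong refl) auto
    then show ?thesis using B1[unfolded transfers_def, rule_format, OF x m that] \<rho>m by simp
  qed
  have "B1 m (\<rho> m) * q32 k p (\<rho> m) x y1 = q32 k s m x y1"
    using single[of 0] m by (simp add: Lentry_def)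
  then show ?thesis
    using single[OF l] q32_pos[OF m x y1] by simp
qed

lemma head_aligned:
  assumes \<rho>: "bij_betw \<rho> {..<J} {..<J}" and L: "\<forall>l<J. \<forall>m<J. Lent p b x l (\<rho> m) = Lent s b x l m"
    and dL: "det (Lmat J T k s b x) \<noteq> 0" and b: "\<forall>i<J - 1. b i \<in> paths K (T - k - 2)"
    and x: "x < K" and \<xi>1: "\<xi>1 \<in> paths K k" and y: "y < K" and m: "m < J"
  shows "head p (\<rho> m) \<xi>1 y x = head s m \<xi>1 y x"
proof -
  have "\<forall>l<J. (\<Sum>j<J. Lent s b x l j * (head p (\<rho> j) \<xi>1 y x - head s j \<xi>1 y x)) = 0"
  proof (intro allI impI)
    fix l assume l: "l < J"
    have "(\<Sum>j<J. head p j \<xi>1 y x * Lent p b x l j) = (\<Sum>j<J. head p (\<rho> j) \<xi>1 y x * Lent p b x l (\<rho> j))"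
      by (rule sum.reindex_bij_betw[OF \<rho>, symmetric])
    also have "\<dots> = (\<Sum>j<J. head p (\<rho> j) \<xi>1 y x * Lent s b x l j)"
      using L l by (intro sum.cong refl) simp
    finally show "(\<Sum>j<J. Lent s b x l j * (head p (\<rho> j) \<xi>1 y x - head s j \<xi>1 y x)) = 0"
      using moments_agree[OF \<xi>1 y x b l] by (simp add: algebra_simps sum_subtractf)
  qed
  from det_nonzero_imp_kernel_zero[OF dL[unfolded Lmat_Lentry] this m] show ?thesis by simp
qed

lemma q43_aligned:
  assumes \<rho>: "bij_betw \<rho> {..<J} {..<J}"
    and heads: "\<forall>\<xi>1\<in>paths K k. \<forall>y<K. \<forall>m<J. head p (\<rho> m) \<xi>1 y x = head s m \<xi>1 y x"
    and a: "\<forall>i<J. a i \<in> paths K k" and y1: "y1 < K" and x: "x < K"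
    and dA: "det (mat J J (\<lambda>(i, j). Lbar_joint s a y1 i j)) \<noteq> 0"
    and \<xi>4: "\<xi>4 \<in> paths K (T - k - 2)" and m: "m < J"
  shows "q43 T k p (\<rho> m) \<xi>4 x = q43 T k s m \<xi>4 x"
proof -
  have T: "k + 2 \<le> T" using k_T by simp
  have "\<forall>i<J. (\<Sum>j<J. Lbar_joint s a y1 i j * (q32 k s j x y1 * (q43 T k p (\<rho> j) \<xi>4 x - q43 T k s j \<xi>4 x))) = 0"
  proof (intro allI impI)
    fix i assume "i < J"
    then have ai: "a i \<in> paths K k" using a by simp
    have "pW J T0 T p (a i @ [y1, x] @ \<xi>4) 0 = pW J T0 T s (a i @ [y1, x] @ \<xi>4) 0"
      using same_law middle_in_paths[OF ai y1 x \<xi>4] by simp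
    then have "(\<Sum>j<J. head p j (a i) y1 x * q43 T k p j \<xi>4 x) = (\<Sum>j<J. head s j (a i) y1 x * q43 T k s j \<xi>4 x)"
      by (simp only: pW_untreated joint_split_middle[OF length_paths[OF ai] k_pos T])
    moreover have "(\<Sum>j<J. head p j (a i) y1 x * q43 T k p j \<xi>4 x)
        = (\<Sum>j<J. head s j (a i) y1 x * q43 T k p (\<rho> j) \<xi>4 x)"
      using sum.reindex_bij_betw[OF \<rho>, of "\<lambda>j. head p j (a i) y1 x * q43 T k p j \<xi>4 x"] heads ai y1
      by simp
    ultimately have "(\<Sum>j<J. head s j (a i) y1 x * (q43 T k p (\<rho> j) \<xi>4 x - q43 T k s j \<xi>4 x)) = 0"
      by (simp add: algebra_simps sum_subtractf)
    then show "(\<Sum>j<J. Lbar_joint s a y1 i j * (q32 k s j x y1 * (q43 T k p (\<rho> j) \<xi>4 x - q43 T k s j \<xi>4 x))) = 0"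
      using head_factor[OF ai] by (simp only: mult.assoc)
  qed
  from det_nonzero_imp_kernel_zero[OF dA this m] show ?thesis
    using q32_pos[OF m x y1] by simp
qed

lemma components_aligned_at:
  assumes x: "x < K" and s3: "s3 < K" and y1: "y1 < K" and y2: "y2 < K" and z: "z < K"
    and a: "\<forall>i<J. a i \<in> paths K k" and b: "\<forall>i<J - 1. b i \<in> paths K (T - k - 2)"
    and dA1: "det (Lbar J k s a y1) \<noteq> 0" and dA2: "det (Lbar J k s a y2) \<noteq> 0"
    and dLx: "det (Lmat J T k s b x) \<noteq> 0" and dL3: "det (Lmat J T k s b s3) \<noteq> 0"
    and dLz: "det (Lmat J T k s b z) \<noteq> 0"
    and inj: "inj_on (eigen_entry k s x y1 y2 z) {..<J}"
  shows "\<exists>\<rho>. bij_betw \<rho> {..<J} {..<J} \<and>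
    (\<forall>\<xi>1\<in>paths K k. \<forall>y<K. \<forall>\<xi>4\<in>paths K (T - k - 2). \<forall>m<J.
       joint p (\<rho> m) T (\<xi>1 @ [y, x] @ \<xi>4) 0 = joint s m T (\<xi>1 @ [y, x] @ \<xi>4) 0) \<and>
    (\<forall>\<xi>1\<in>paths K k. \<forall>y<K. \<forall>m<J. head p (\<rho> m) \<xi>1 y s3 = head s m \<xi>1 y s3)"
proof -
  have len: "\<forall>i<J. length (a i) = k" using a length_paths by blast
  note dA1' = det_Lbar_nonzero[OF dA1 len k_pos] and dA2' = det_Lbar_nonzero[OF dA2 len k_pos]
  obtain B1 where B1: "transfers B1 b y1"
    using transfer_matrix[OF a b y1 dA1'] by blast
  obtain B2 where B2: "transfers B2 b y2"
    using transfer_matrix[OF a b y2 dA2'] by blast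
  obtain \<rho> where \<rho>: "bij_betw \<rho> {..<J} {..<J}" and mono: "\<forall>m<J. \<forall>j<J. B1 m j \<noteq> 0 \<longleftrightarrow> j = \<rho> m"
    using transfer_matrix_monomial[OF a b x z y1 y2 B1 B2 dA1' dA2' dLx dLz inj] by blast
  have L: "\<forall>l<J. \<forall>m<J. Lent p b x' l (\<rho> m) = Lent s b x' l m" if "x' < K" for x'
    using Lentry_aligned[OF y1 that B1 mono \<rho>] by blast
  have heads: "\<forall>\<xi>1\<in>paths K k. \<forall>y<K. \<forall>m<J. head p (\<rho> m) \<xi>1 y x' = head s m \<xi>1 y x'"
    if "x' < K" "det (Lmat J T k s b x') \<noteq> 0" for x'
    using head_aligned[OF \<rho> L[OF that(1)] that(2) b that(1)] by blast
  have "joint p (\<rho> m) T (\<xi>1 @ [y, x] @ \<xi>4) 0 = joint s m T (\<xi>1 @ [y, x] @ \<xi>4) 0"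
    if "\<xi>1 \<in> paths K k" "y < K" "\<xi>4 \<in> paths K (T - k - 2)" "m < J" for \<xi>1 y \<xi>4 m
  proof -
    have T: "k + 2 \<le> T" using k_T by simp
    show ?thesis
      unfolding joint_split_middle[OF length_paths[OF that(1)] k_pos T]
      using heads[OF x dLx] q43_aligned[OF \<rho> heads[OF x dLx] a y1 x dA1' that(3,4)] that
      by simp
  qed
  then show ?thesis using \<rho> heads[OF s3 dL3] by blast
qed

lemma anchor_heads_determine_type:
  assumes s3: "s3 < K" and y1: "y1 < K" and a: "\<forall>i<J. a i \<in> paths K k"
    and dA: "det (mat J J (\<lambda>(i, j). Lbar_joint s a y1 i j)) \<noteq> 0" and m: "m < J" and m': "m' < J"
    and heads: "\<forall>\<xi>1\<in>paths K k. \<forall>y<K. head s m \<xi>1 y s3 = head s m' \<xi>1 y s3"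
  shows "m = m'"
proof (rule ccontr)
  assume ne: "m \<noteq> m'"
  define v where "v j = (if j = m then q32 k s m s3 y1 else 0) - (if j = m' then q32 k s m' s3 y1 else 0)" for j
  have "\<forall>i<J. (\<Sum>j<J. Lbar_joint s a y1 i j * v j) = 0"
  proof (intro allI impI)
    fix i assume "i < J"
    then have ai: "a i \<in> paths K k" using a by simp
    have "(\<Sum>j<J. Lbar_joint s a y1 i j * v j)
        = (\<Sum>j<J. if j = m then Lbar_joint s a y1 i j * q32 k s j s3 y1 else 0)
          - (\<Sum>j<J. if j = m' then Lbar_joint s a y1 i j * q32 k s j s3 y1 else 0)"
      unfolding v_def sum_subtractf[symmetric] by (intro sum.cong refl) (simp add: right_diff_distrib)
    also have "\<dots> = head s m (a i) y1 s3 - head s m' (a i) y1 s3"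
      using m m' by (simp only: head_factor[OF ai]) simp
    finally show "(\<Sum>j<J. Lbar_joint s a y1 i j * v j) = 0" using heads ai y1 by simp
  qed
  from det_nonzero_imp_kernel_zero[OF dA this m] have "q32 k s m s3 y1 = 0"
    using ne by (simp add: v_def)
  then show False using q32_pos[OF m s3 y1] by simp
qed

lemma anchor_determines_relabelling:
  assumes s3: "s3 < K" and y1: "y1 < K" and a: "\<forall>i<J. a i \<in> paths K k"
    and dA: "det (mat J J (\<lambda>(i, j). Lbar_joint s a y1 i j)) \<noteq> 0"
    and \<rho>1: "bij_betw \<rho>1 {..<J} {..<J}"
    and heads1: "\<forall>\<xi>1\<in>paths K k. \<forall>y<K. \<forall>m<J. head p (\<rho>1 m) \<xi>1 y s3 = head s m \<xi>1 y s3"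
    and \<rho>2: "bij_betw \<rho>2 {..<J} {..<J}"
    and heads2: "\<forall>\<xi>1\<in>paths K k. \<forall>y<K. \<forall>m<J. head p (\<rho>2 m) \<xi>1 y s3 = head s m \<xi>1 y s3"
    and m: "m < J"
  shows "\<rho>2 m = \<rho>1 m"
proof -
  obtain m' where m': "m' < J" "\<rho>1 m' = \<rho>2 m"
    using \<rho>1 \<rho>2 m by (metis bij_betw_apply bij_betw_iff_bijections lessThan_iff)
  have "\<forall>\<xi>1\<in>paths K k. \<forall>y<K. head s m \<xi>1 y s3 = head s m' \<xi>1 y s3"
    using heads1 heads2 m m' by metis
  then have "m = m'" using anchor_heads_determine_type[OF s3 y1 a dA m m'(1)] by blast
  then show ?thesis using m' by simp
qed

lemma untreated_components_aligned:
  "\<exists>\<rho>. bij_betw \<rho> {..<J} {..<J} \<and> (\<forall>xs\<in>paths K T. \<forall>m<J. joint p (\<rho> m) T xs 0 = joint s m T xs 0)"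
proof -
  obtain s3 where s3: "s3 < K" and ID_a_at: "\<forall>\<xi>3<K. \<exists>chk2<K. \<exists>bar2<K. \<exists>bar3<K. \<exists>a b.
      (\<forall>i<J. a i \<in> paths K k) \<and> (\<forall>i<J - 1. b i \<in> paths K (T - k - 2)) \<and>
      det (Lbar J k s a chk2) \<noteq> 0 \<and> det (Lbar J k s a bar2) \<noteq> 0 \<and>
      det (Lmat J T k s b \<xi>3) \<noteq> 0 \<and> det (Lmat J T k s b s3) \<noteq> 0 \<and>
      det (Lmat J T k s b bar3) \<noteq> 0 \<and> inj_on (eigen_entry k s \<xi>3 chk2 bar2 bar3) {..<J}"
    using ID_s unfolding ID_def ID_a_def by blast
  define aligned_at where "aligned_at x \<rho> \<longleftrightarrow> bij_betw \<rho> {..<J} {..<J} \<and>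
    (\<forall>\<xi>1\<in>paths K k. \<forall>y<K. \<forall>\<xi>4\<in>paths K (T - k - 2). \<forall>m<J.
       joint p (\<rho> m) T (\<xi>1 @ [y, x] @ \<xi>4) 0 = joint s m T (\<xi>1 @ [y, x] @ \<xi>4) 0) \<and>
    (\<forall>\<xi>1\<in>paths K k. \<forall>y<K. \<forall>m<J. head p (\<rho> m) \<xi>1 y s3 = head s m \<xi>1 y s3)" for x \<rho>
  have "\<exists>\<rho>. aligned_at x \<rho>" if x: "x < K" for x
  proof -
    from ID_a_at x obtain y1 y2 z a b where "y1 < K" "y2 < K" "z < K"
      "\<forall>i<J. a i \<in> paths K k" "\<forall>i<J - 1. b i \<in> paths K (T - k - 2)"
      "det (Lbar J k s a y1) \<noteq> 0" "det (Lbar J k s a y2) \<noteq> 0"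
      "det (Lmat J T k s b x) \<noteq> 0" "det (Lmat J T k s b s3) \<noteq> 0" "det (Lmat J T k s b z) \<noteq> 0"
      "inj_on (eigen_entry k s x y1 y2 z) {..<J}"
      by blast
    from components_aligned_at[OF x s3 this] show ?thesis unfolding aligned_at_def .
  qed
  then obtain \<rho>x where \<rho>x: "\<forall>x<K. aligned_at x (\<rho>x x)" by metis
  define \<rho> where "\<rho> = \<rho>x s3"
  have \<rho>: "bij_betw \<rho> {..<J} {..<J}" using \<rho>x s3 unfolding \<rho>_def aligned_at_def by blast
  obtain y1 a where y1: "y1 < K" and a: "\<forall>i<J. a i \<in> paths K k" and dA: "det (Lbar J k s a y1) \<noteq> 0"
    using ID_a_at s3 by blast
  have dA': "det (mat J J (\<lambda>(i, j). Lbar_joint s a y1 i j)) \<noteq> 0"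
    using det_Lbar_nonzero[OF dA _ k_pos] a length_paths by blast
  have same: "\<rho>x x m = \<rho> m" if "x < K" and "m < J" for x m
    using anchor_determines_relabelling[OF s3 y1 a dA'] \<rho>x s3 that
    unfolding aligned_at_def \<rho>_def by blast
  have "joint p (\<rho> m) T xs 0 = joint s m T xs 0" if xs: "xs \<in> paths K T" and m: "m < J" for xs m
  proof -
    have T: "k + 2 \<le> length xs" using xs k_T by (simp add: length_paths)
    have "take k xs \<in> paths K k" "xs ! k < K" "xs ! (k + 1) < K" "drop (k + 2) xs \<in> paths K (T - k - 2)"
      using xs k_T by (auto intro: take_in_paths nth_paths_less dest: drop_in_paths)
    then have "joint p (\<rho>x (xs ! (k + 1)) m) T xs 0 = joint s m T xs 0"
      using \<rho>x m take_nth_nth_drop[OF T] unfolding aligned_at_def by metis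
    then show ?thesis using same[OF \<open>xs ! (k + 1) < K\<close> m] by simp
  qed
  with \<rho> show ?thesis by blast
qed

context
  fixes \<rho> :: "nat \<Rightarrow> nat"
  assumes \<rho>_bij: "bij_betw \<rho> {..<J} {..<J}"
    and \<rho>_untreated: "\<forall>xs\<in>paths K T. \<forall>m<J. joint p (\<rho> m) T xs 0 = joint s m T xs 0"
begin

lemma \<rho>_less: "m < J \<Longrightarrow> \<rho> m < J"
  using \<rho>_bij by (auto dest: bij_betw_apply)

lemma sum_reindex_\<rho>: "(\<Sum>j<J. f j) = (\<Sum>m<J. f (\<rho> m))"
  by (rule sum.reindex_bij_betw[OF \<rho>_bij, symmetric])

lemma untreated_prefix_aligned:
  assumes ys: "ys \<in> paths K n" and n: "1 \<le> n" "n \<le> T" and m: "m < J"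
  shows "joint p (\<rho> m) n ys 0 = joint s m n ys 0"
proof -
  have marg: "(\<Sum>zs\<in>paths K (T - n). joint \<theta> j T (ys @ zs) 0) = joint \<theta> j n ys 0"
    if "valid_pmfs K J T0 T \<theta>" "j < J" for \<theta> j
    using sum_Ppre_extensions[OF that ys n order_refl] by (simp add: joint_def sum_distrib_left[symmetric])
  have "joint p (\<rho> m) T (ys @ zs) 0 = joint s m T (ys @ zs) 0" if "zs \<in> paths K (T - n)" for zs
    using \<rho>_untreated append_in_paths[OF ys that] n m by simp
  then show ?thesis
    using marg[OF valid_pmfs_p \<rho>_less[OF m]] marg[OF valid_pmfs_s m] by simp
qed

text \<open>The transition q21 is only identified where the untreated history has positive weight;
  elsewhere overlap makes the treated weight vanish as well.\<close>

lemma q21_aligned_on_treated: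
  assumes \<xi>1: "\<xi>1 \<in> paths K k" and x: "x < K" and m: "m < J"
  shows "joint p (\<rho> m) k \<xi>1 1 * q21 k p (\<rho> m) x \<xi>1 = joint p (\<rho> m) k \<xi>1 1 * q21 k s m x \<xi>1"
proof (cases "joint s m k \<xi>1 0 = 0")
  case True
  have "joint p (\<rho> m) k \<xi>1 0 = 0"
    using True untreated_prefix_aligned[OF \<xi>1 k_pos _ m] k_T by simp
  then have "joint p (\<rho> m) k \<xi>1 1 = 0"
    using joint_treated_vanishes[OF model_p eps_pos \<rho>_less[OF m] \<xi>1 k_pos _ T0_T] k_T0 by simp
  then show ?thesis by simp
next
  case False
  have "\<xi>1 @ [x] \<in> paths K (Suc k)" using \<xi>1 x by (auto simp: paths_def)
  then have "joint p (\<rho> m) (Suc k) (\<xi>1 @ [x]) 0 = joint s m (Suc k) (\<xi>1 @ [x]) 0"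
    using untreated_prefix_aligned[of "\<xi>1 @ [x]" "Suc k" m] k_T m by simp
  moreover have "joint p (\<rho> m) k \<xi>1 0 = joint s m k \<xi>1 0"
    using untreated_prefix_aligned[OF \<xi>1 k_pos _ m] k_T by simp
  ultimately have "q21 k p (\<rho> m) x \<xi>1 = q21 k s m x \<xi>1"
    using False by (simp add: joint_head(1)[OF length_paths[OF \<xi>1] k_pos])
  then show ?thesis by simp
qed

lemma treated_prefix_aligned:
  assumes \<xi>1: "\<xi>1 \<in> paths K k" and m: "m < J"
  shows "joint p (\<rho> m) k \<xi>1 1 = joint s m k \<xi>1 1"
proof -
  obtain c where c: "\<forall>i<J. c i < K" and dc: "det (mat J J (\<lambda>(i, j). q21 k s j (c i) \<xi>1)) \<noteq> 0"
    using ID_s \<xi>1 unfolding ID_def ID_c_def by blast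
  have "\<forall>i<J. (\<Sum>j<J. q21 k s j (c i) \<xi>1 * (joint p (\<rho> j) k \<xi>1 1 - joint s j k \<xi>1 1)) = 0"
  proof (intro allI impI)
    fix i assume "i < J"
    then have x: "c i < K" using c by simp
    have pth: "\<xi>1 @ [c i] \<in> paths K (k + 1)" using \<xi>1 x by (auto simp: paths_def)
    have "(\<Sum>zs\<in>paths K (T - (k + 1)). pW J T0 T p ((\<xi>1 @ [c i]) @ zs) 1)
        = (\<Sum>zs\<in>paths K (T - (k + 1)). pW J T0 T s ((\<xi>1 @ [c i]) @ zs) 1)"
    proof (rule sum.cong[OF refl])
      fix zs assume "zs \<in> paths K (T - (k + 1))"
      then have "(\<xi>1 @ [c i]) @ zs \<in> paths K T" using append_in_paths[OF pth] k_T by fastforce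
      then show "pW J T0 T p ((\<xi>1 @ [c i]) @ zs) 1 = pW J T0 T s ((\<xi>1 @ [c i]) @ zs) 1"
        using same_law by blast
    qed
    then have "(\<Sum>j<J. joint p j k \<xi>1 1 * q21 k p j (c i) \<xi>1) = (\<Sum>j<J. joint s j k \<xi>1 1 * q21 k s j (c i) \<xi>1)"
      using treated_moment[OF valid_pmfs_p \<xi>1 x k_pos k_T0 T0_T]
        treated_moment[OF valid_pmfs_s \<xi>1 x k_pos k_T0 T0_T] by simp
    moreover have "(\<Sum>j<J. joint p j k \<xi>1 1 * q21 k p j (c i) \<xi>1)
        = (\<Sum>j<J. joint p (\<rho> j) k \<xi>1 1 * q21 k p (\<rho> j) (c i) \<xi>1)"
      by (rule sum_reindex_\<rho>)
    also have "\<dots> = (\<Sum>j<J. joint p (\<rho> j) k \<xi>1 1 * q21 k s j (c i) \<xi>1)"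
      using q21_aligned_on_treated[OF \<xi>1 x] by (intro sum.cong refl) simp
    ultimately show "(\<Sum>j<J. q21 k s j (c i) \<xi>1 * (joint p (\<rho> j) k \<xi>1 1 - joint s j k \<xi>1 1)) = 0"
      by (simp add: algebra_simps sum_subtractf)
  qed
  from det_nonzero_imp_kernel_zero[OF dc this m] show ?thesis by simp
qed

lemma counterfactual_aligned:
  assumes xs: "xs \<in> paths K T"
  shows "(\<Sum>j<J. mixw p j * pW0cf T0 T p j xs) = (\<Sum>j<J. mixw s j * pW0cf T0 T s j xs)"
proof -
  have kT: "k \<le> T" "k \<le> T0" using k_T k_T0 by simp_all
  have tk: "take k xs \<in> paths K k" using take_in_paths[OF xs kT(1)] .
  have "mixw p (\<rho> m) * pW0cf T0 T p (\<rho> m) xs = mixw s m * pW0cf T0 T s m xs" if m: "m < J" for m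
    using mixw_pW0cf_eq[OF model_p eps_pos \<rho>_less[OF m] xs k_pos kT(2) T0_T]
      mixw_pW0cf_eq[OF model_s eps_pos m xs k_pos kT(2) T0_T]
      treated_prefix_aligned[OF tk m] untreated_prefix_aligned[OF tk k_pos kT(1) m]
      \<rho>_untreated xs m
    by simp
  then show ?thesis
    by (subst sum_reindex_\<rho>) simp
qed

lemma treated_mass_aligned:
  "(\<Sum>j<J. mixw p j * prD1 K T0 p j) = (\<Sum>j<J. mixw s j * prD1 K T0 s j)"
proof -
  have kT: "k \<le> T" using k_T by simp
  have mass: "(\<Sum>j<J. mixw \<theta> j * prD1 K T0 \<theta> j) = (\<Sum>\<xi>1\<in>paths K k. \<Sum>j<J. joint \<theta> j k \<xi>1 1)"
    if "valid_pmfs K J T0 T \<theta>" for \<theta>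
    using prD1_eq_sum_Ppre[OF that _ k_pos kT]
    by (simp add: joint_def sum_distrib_left sum.swap[of _ "paths K k"])
  have "(\<Sum>j<J. joint p j k \<xi>1 1) = (\<Sum>j<J. joint s j k \<xi>1 1)" if "\<xi>1 \<in> paths K k" for \<xi>1
  proof -
    have "(\<Sum>j<J. joint p j k \<xi>1 1) = (\<Sum>m<J. joint p (\<rho> m) k \<xi>1 1)"
      by (rule sum_reindex_\<rho>)
    also have "\<dots> = (\<Sum>m<J. joint s m k \<xi>1 1)"
      using treated_prefix_aligned[OF that] by (intro sum.cong refl) simp
    finally show ?thesis .
  qed
  then show ?thesis by (simp add: mass[OF valid_pmfs_p] mass[OF valid_pmfs_s])
qed

end

lemma att_eq: "att K J T0 T p t c = att K J T0 T s t c"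
proof -
  obtain \<rho> where \<rho>: "bij_betw \<rho> {..<J} {..<J}"
    and untreated: "\<forall>xs\<in>paths K T. \<forall>m<J. joint p (\<rho> m) T xs 0 = joint s m T xs 0"
    using untreated_components_aligned by blast
  have T0: "1 \<le> T0" using k_T0 by simp
  have "(\<Sum>xs\<in>paths K T. if xs ! (t - 1) = c then pW J T0 T p xs 1 else 0)
      = (\<Sum>xs\<in>paths K T. if xs ! (t - 1) = c then pW J T0 T s xs 1 else 0)"
    using same_law by (intro sum.cong refl) simp
  moreover have "(\<Sum>xs\<in>paths K T. if xs ! (t - 1) = c then (\<Sum>j<J. mixw p j * pW0cf T0 T p j xs) else 0)
      = (\<Sum>xs\<in>paths K T. if xs ! (t - 1) = c then (\<Sum>j<J. mixw s j * pW0cf T0 T s j xs) else 0)"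
    using counterfactual_aligned[OF \<rho> untreated] by (intro sum.cong refl) simp
  ultimately show ?thesis
    by (simp add: att_observable_form[OF valid_pmfs_p T0 T0_T] att_observable_form[OF valid_pmfs_s T0 T0_T]
        treated_mass_aligned[OF \<rho> untreated])
qed

end

theorem corollary2:
  fixes K J T0 T k :: nat and \<epsilon> :: real and \<psi>s \<psi> :: param
  assumes "K \<ge> 2" and "J \<ge> 1" and "T0 \<ge> 1" and "T > T0" and "\<epsilon> > 0"
    and "k \<ge> 1" and "T0 \<ge> k + 1" and "T \<ge> 2 * (k + 1)"
    and "model K J T0 T \<epsilon> \<psi>s"
    and "\<forall>i j. i < j \<and> j < J \<longrightarrow> mixw \<psi>s i < mixw \<psi>s j"
    and "ID K J T k \<psi>s"
    and "model K J T0 T \<epsilon> \<psi>"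
    and "\<forall>xs\<in>paths K T. \<forall>d\<in>{0,1}. pW J T0 T \<psi> xs d = pW J T0 T \<psi>s xs d"
    and "T0 + 1 \<le> t" and "t \<le> T"
  shows "\<forall>c<K. att K J T0 T \<psi> t c = att K J T0 T \<psi>s t c"
proof -
  \<comment> \<open>The ATT sums over all types.\<close>
  interpret observationally_equivalent K J T0 T k \<epsilon> \<psi>s \<psi>
    by unfold_locales (use assms in auto)
  show ?thesis using att_eq by blast
qed

end
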